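(* Let $G\le\mathrm{Aut}(\mathcal{T}_d)$ be self-similar and let $H\le G$ be $A$-coarsely self-similar for some finite $A\subseteq V_d\cap\mathrm{Aut}(\mathcal{T}_d)$. Then for every $m$, every $[x]_H\in P_H^m$ and every $q\in\mathbb{N}$, there are only finitely many $[y]_H\in P_H^m$ with $[x]_H<[y]_H$ and $\phi([y]_H)=q$.
   Context: Setting. $d\ge2$, $\mathcal{T}_d$ the rooted $d$-ary tree on $X^*$, $X=\{1,\dots,d\}$. $S_n\wr G=S_n\ltimes G^n$, elements $\sigma(g_1,\dots,g_n)$, product $\sigma(\vec f)\tau(\vec g)=\sigma\tau(f_{\tau(1)}g_1,\dots,f_{\tau(n)}g_n)$ (permutations act on the left). Wreath recursion $f=\rho(f)(f_1,\dots,f_d)$, $f(xw)=\rho(f)(x)f_x(w)$. $G$ self-similar: all states of elements of $G$ are in $G$. Cloning maps $\kappa_k^n:S_n\wr G\to S_{n+d-1}\wr G$: $(\sigma(f_1,\dots,f_n))\kappa_k^n=(\sigma)\varsigma_k^n\rho(f_k)^{(k)}(f_1,\dots,f_{k-1},f_k^1,\dots,f_k^d,f_{k+1},\dots,f_n)$ with $f_k=\rho(f_k)(f_k^1,\dots,f_k^d)$, where $\tau^{(k)}\in S_{n+d-1}$ acts by $k+j-1\mapsto k+\tau(j)-1$ on $\{k,\dots,k+d-1\}$ and trivially elsewhere, and $(\sigma)\varsigma_k^n\in S_{n+d-1}$ is obtained from $\sigma$ by replacing domain point $k$ by the block $k,\dots,k+d-1$ and range point $\sigma(k)$ by the block $\sigma(k),\dots,\sigma(k)+d-1$,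 with $k+j\mapsto\sigma(k)+j$, other points keeping their relative order. Groupoid. A forest is a finite ordered tuple of finite rooted $d$-ary trees (each vertex has $0$ or $d$ ordered children); its roots and its leaves are ordered left to right. Consider triples $(F_-,f,F_+)$ with $F_\pm$ forests with the same number $n$ of leaves and $f\in S_n\wr G$. An expansion replaces it by $(F_-',(f)\kappa_k^n,F_+')$ with $F_+'$ = $F_+$ with a $d$-caret attached at its $k$th leaf and $F_-'$ = $F_-$ with a $d$-caret attached at its $\sigma(k)$th leaf ($f=\sigma(\vec f)$). $[F_-,f,F_+]$ is the class under the equivalence generated by expansions; the roots of $F_-$ are its heads and those of $F_+$ its feet (their numbers are invariants). These classes form a groupoid $\mathcal{G}$: if $x$ has as many feet as $y$ has heads, expand to $x=[F,f,E]$, $y=[E,g,D]$ and set $xy=[F,fg,D]$; $x^{-1}=[F_+,f^{-1},F_-]$. $1_n$ denotes the forest of $n$ one-vertex trees (and also $[1_n,\mathrm{id},1_n]$); $\wedge_k^n$ is $1_n$ with a $d$-caret attached at the $k$th vertex. The elements with one head and one foot form a group isomorphic to $V_d(G)$. Poset. Fix $H\le G$. For $x\in\mathcal{G}$ with $n$ feet put $[x]_H=x\{[1_n,w,1_n]:w\in S_n\wr H\}$; $P_H^m$ is the set of such cosets with $x$ having $m$ heads. A splitting is an element of the form $[1_n,w_0,1_n][\wedge_{k_1}^n,w_1,1_{n+d-1}]\cdots[\wedge_{k_r}^{n+(r-1)(d-1)},w_r,1_{n+r(d-1)}]$ with $w_i\in S_{n+i(d-1)}\wr H$ and $1\le k_i\le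 n+(i-1)(d-1)$; $r$ is its length. $[x]_H\le[y]_H$ iff $x^{-1}y$ is a splitting (a well-defined partial order). $\phi([x]_H)$ is the number of feet of $x$. $A$-coarsely self-similar: for finite $A\subseteq V_d\cap\mathrm{Aut}(\mathcal{T}_d)$ (tree automorphisms lying in the Higman–Thompson group $V_d$), $H$ is $A$-coarsely self-similar if every first-level state of every $h\in H$ lies in $H\cup A$. *)

theory Defs
  imports Main "HOL-Combinatorics.Permutations"
begin

text \<open>Conventions: everything is 0-based.  The alphabet is
  X = {0..<d}, vertices of the d-ary tree are words in lists {0..<d},
  permutations in S_n act on {0..<n} (identity elsewhere), leaves/roots are
  indexed 0..n-1 from left to right.  Tree automorphisms are functions on
  nat lists that are the identity off the tree.  Groups act on the left,
  the product f g is composition f o g.\<close>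

definition words :: "nat \<Rightarrow> nat list set" where
  "words d = lists {0..<d}"

definition aut :: "nat \<Rightarrow> (nat list \<Rightarrow> nat list) set" where
  "aut d = {g. bij_betw g (words d) (words d)
              \<and> (\<forall>w. w \<notin> words d \<longrightarrow> g w = w)
              \<and> (\<forall>w\<in>words d. length (g w) = length w)
              \<and> (\<forall>u\<in>words d. \<forall>v\<in>words d. take (length u) (g (u @ v)) = g u)}"

definition ainv :: "nat \<Rightarrow> (nat list \<Rightarrow> nat list) \<Rightarrow> (nat list \<Rightarrow> nat list)" where
  "ainv d g = (\<lambda>w. if w \<in> words d then inv_into (words d) g w else w)"

definition subgrp :: "nat \<Rightarrow> (nat list \<Rightarrow> nat list) set \<Rightarrow> bool" where
  "subgrp d H \<longleftrightarrow> H \<subseteq> aut d \<and> id \<in> H \<and> (\<forall>f\<in>H. \<forall>g\<in>H. f \<circ> g \<in> H)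
                 \<and> (\<forall>f\<in>H. ainv d f \<in> H)"

text \<open>Wreath recursion f = rho(f)(f_0,...,f_{d-1}): f(x w) = rho(f)(x) f_x(w).\<close>
definition rho :: "nat \<Rightarrow> (nat list \<Rightarrow> nat list) \<Rightarrow> nat \<Rightarrow> nat" where
  "rho d g = (\<lambda>x. if x < d then hd (g [x]) else x)"

definition state :: "nat \<Rightarrow> (nat list \<Rightarrow> nat list) \<Rightarrow> nat \<Rightarrow> (nat list \<Rightarrow> nat list)" where
  "state d g x = (\<lambda>w. if w \<in> words d then tl (g (x # w)) else w)"

definition self_similar :: "nat \<Rightarrow> (nat list \<Rightarrow> nat list) set \<Rightarrow> bool" where
  "self_similar d G \<longleftrightarrow> (\<forall>g\<in>G. \<forall>x<d. state d g x \<in> G)"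

definition coarsely_self_similar ::
  "nat \<Rightarrow> (nat list \<Rightarrow> nat list) set \<Rightarrow> (nat list \<Rightarrow> nat list) set \<Rightarrow> bool" where
  "coarsely_self_similar d A H \<longleftrightarrow> (\<forall>h\<in>H. \<forall>x<d. state d h x \<in> H \<union> A)"

definition boundary :: "nat \<Rightarrow> (nat \<Rightarrow> nat) set" where
  "boundary d = {\<xi>. \<forall>i. \<xi> i < d}"

definition is_prefix :: "nat list \<Rightarrow> (nat \<Rightarrow> nat) \<Rightarrow> bool" where
  "is_prefix u \<xi> \<longleftrightarrow> u = map \<xi> [0..<length u]"

definition bdry_act :: "(nat list \<Rightarrow> nat list) \<Rightarrow> (nat \<Rightarrow> nat) \<Rightarrow> (nat \<Rightarrow> nat)" where
  "bdry_act g \<xi> = (\<lambda>i. g (map \<xi> [0..<Suc i]) ! i)"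

text \<open>Complete prefix code = set of leaves of a finite rooted d-ary tree.\<close>
definition complete_prefix_code :: "nat \<Rightarrow> nat list set \<Rightarrow> bool" where
  "complete_prefix_code d C \<longleftrightarrow> finite C \<and> C \<subseteq> words d
     \<and> (\<forall>\<xi>\<in>boundary d. \<exists>!u. u \<in> C \<and> is_prefix u \<xi>)"

definition in_Vd :: "nat \<Rightarrow> (nat list \<Rightarrow> nat list) \<Rightarrow> bool" where
  "in_Vd d g \<longleftrightarrow> (\<exists>C1 C2 \<beta>. complete_prefix_code d C1 \<and> complete_prefix_code d C2
      \<and> bij_betw \<beta> C1 C2
      \<and> (\<forall>\<xi>\<in>boundary d. \<forall>u\<in>C1. is_prefix u \<xi> \<longrightarrow>
           bdry_act g \<xi> = (\<lambda>i. if i < length (\<beta> u) then \<beta> u ! i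
                                else \<xi> (i - length (\<beta> u) + length u))))"

section \<open>Wreath products S_n wr G\<close>

type_synonym wel = "(nat \<Rightarrow> nat) \<times> (nat list \<Rightarrow> nat list) list"

definition wr :: "nat \<Rightarrow> (nat list \<Rightarrow> nat list) set \<Rightarrow> wel set" where
  "wr n G = {(\<sigma>, fs). \<sigma> permutes {0..<n} \<and> length fs = n \<and> set fs \<subseteq> G}"

definition wmult :: "wel \<Rightarrow> wel \<Rightarrow> wel" where
  "wmult x y = (case x of (\<sigma>, fs) \<Rightarrow> case y of (\<tau>, gs) \<Rightarrow>
      (\<sigma> \<circ> \<tau>, map (\<lambda>i. (fs ! \<tau> i) \<circ> (gs ! i)) [0..<length gs]))"

definition winv :: "nat \<Rightarrow> wel \<Rightarrow> wel" where
  "winv d x = (case x of (\<sigma>, fs) \<Rightarrow>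
      (inv_into UNIV \<sigma>, map (\<lambda>i. ainv d (fs ! (inv_into UNIV \<sigma> i))) [0..<length fs]))"

definition lift :: "nat \<Rightarrow> nat \<Rightarrow> (nat \<Rightarrow> nat) \<Rightarrow> (nat \<Rightarrow> nat)" where
  "lift d k \<tau> = (\<lambda>i. if k \<le> i \<and> i < k + d then k + \<tau> (i - k) else i)"

definition varsigma :: "nat \<Rightarrow> nat \<Rightarrow> (nat \<Rightarrow> nat) \<Rightarrow> nat \<Rightarrow> (nat \<Rightarrow> nat)" where
  "varsigma d n \<sigma> k = (\<lambda>i.
     let sh = (\<lambda>v. if v < \<sigma> k then v else v + (d - 1)) in
     if i < k then sh (\<sigma> i)
     else if i < k + d then \<sigma> k + (i - k)
     else if i < n + d - 1 then sh (\<sigma> (i - (d - 1)))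
     else i)"

definition kappa :: "nat \<Rightarrow> wel \<Rightarrow> nat \<Rightarrow> wel" where
  "kappa d x k = (case x of (\<sigma>, fs) \<Rightarrow>
     (varsigma d (length fs) \<sigma> k \<circ> lift d k (rho d (fs ! k)),
      take k fs @ map (state d (fs ! k)) [0..<d] @ drop (Suc k) fs))"

datatype tree = Lf | Nd "tree list"

fun full :: "nat \<Rightarrow> tree \<Rightarrow> bool" where
  "full d Lf = True"
| "full d (Nd ts) = (length ts = d \<and> (\<forall>t\<in>set ts. full d t))"

fun nleaves :: "tree \<Rightarrow> nat" where
  "nleaves Lf = 1"
| "nleaves (Nd ts) = sum_list (map nleaves ts)"

definition forest :: "nat \<Rightarrow> tree list \<Rightarrow> bool" where
  "forest d F \<longleftrightarrow> (\<forall>t\<in>set F. full d t)"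

definition fleaves :: "tree list \<Rightarrow> nat" where
  "fleaves F = sum_list (map nleaves F)"

text \<open>Attach a d-caret at the k-th leaf (0-based, left to right).\<close>
fun attach :: "nat \<Rightarrow> nat \<Rightarrow> tree \<Rightarrow> tree"
and attachF :: "nat \<Rightarrow> nat \<Rightarrow> tree list \<Rightarrow> tree list" where
  "attach d k Lf = (if k = 0 then Nd (replicate d Lf) else Lf)"
| "attach d k (Nd ts) = Nd (attachF d k ts)"
| "attachF d k [] = []"
| "attachF d k (t # ts) =
     (if k < nleaves t then attach d k t # ts else t # attachF d (k - nleaves t) ts)"

definition triv :: "nat \<Rightarrow> tree list" where
  "triv n = replicate n Lf"

definition caretF :: "nat \<Rightarrow> nat \<Rightarrow> nat \<Rightarrow> tree list" where
  "caretF d n k = attachF d k (triv n)"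

section \<open>The groupoid\<close>

type_synonym triple = "tree list \<times> wel \<times> tree list"

definition valid :: "nat \<Rightarrow> (nat list \<Rightarrow> nat list) set \<Rightarrow> triple \<Rightarrow> bool" where
  "valid d G t = (case t of (Fm, f, Fp) \<Rightarrow>
     forest d Fm \<and> forest d Fp \<and> fleaves Fm = length (snd f) \<and> fleaves Fp = length (snd f)
     \<and> f \<in> wr (length (snd f)) G)"

definition expand :: "nat \<Rightarrow> triple \<Rightarrow> nat \<Rightarrow> triple" where
  "expand d t k = (case t of (Fm, f, Fp) \<Rightarrow>
     (attachF d (fst f k) Fm, kappa d f k, attachF d k Fp))"

definition expRel :: "nat \<Rightarrow> (nat list \<Rightarrow> nat list) set \<Rightarrow> (triple \<times> triple) set" where
  "expRel d G = {(t, expand d t k) | t k. valid d G t \<and> k < length (snd (fst (snd t)))}"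

definition eqrel :: "nat \<Rightarrow> (nat list \<Rightarrow> nat list) set \<Rightarrow> (triple \<times> triple) set" where
  "eqrel d G = (expRel d G \<union> (expRel d G)\<inverse>)\<^sup>*"

definition cls :: "nat \<Rightarrow> (nat list \<Rightarrow> nat list) set \<Rightarrow> triple \<Rightarrow> triple set" where
  "cls d G t = {t'. (t, t') \<in> eqrel d G}"

definition grpd :: "nat \<Rightarrow> (nat list \<Rightarrow> nat list) set \<Rightarrow> triple set set" where
  "grpd d G = {cls d G t | t. valid d G t}"

definition has_heads :: "triple set \<Rightarrow> nat \<Rightarrow> bool" where
  "has_heads X m \<longleftrightarrow> (\<exists>Fm f Fp. (Fm, f, Fp) \<in> X \<and> length Fm = m)"

definition has_feet :: "triple set \<Rightarrow> nat \<Rightarrow> bool" where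
  "has_feet X m \<longleftrightarrow> (\<exists>Fm f Fp. (Fm, f, Fp) \<in> X \<and> length Fp = m)"

text \<open>Product: expand to x = [F,f,E], y = [E,g,D] and take [F, fg, D].\<close>
definition gmult :: "nat \<Rightarrow> (nat list \<Rightarrow> nat list) set \<Rightarrow> triple set \<Rightarrow> triple set \<Rightarrow> triple set" where
  "gmult d G X Y = {t. \<exists>F f E g D. (F, f, E) \<in> X \<and> (E, g, D) \<in> Y
                         \<and> ((F, wmult f g, D), t) \<in> eqrel d G}"

definition ginv :: "nat \<Rightarrow> (nat list \<Rightarrow> nat list) set \<Rightarrow> triple set \<Rightarrow> triple set" where
  "ginv d G X = {t. \<exists>Fm f Fp. (Fm, f, Fp) \<in> X \<and> ((Fp, winv d f, Fm), t) \<in> eqrel d G}"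

section \<open>The poset P_H\<close>

definition coset :: "nat \<Rightarrow> (nat list \<Rightarrow> nat list) set \<Rightarrow> (nat list \<Rightarrow> nat list) set
                     \<Rightarrow> triple set \<Rightarrow> triple set set" where
  "coset d G H x = {gmult d G x (cls d G (triv n, w, triv n)) | n w. has_feet x n \<and> w \<in> wr n H}"

definition PH :: "nat \<Rightarrow> (nat list \<Rightarrow> nat list) set \<Rightarrow> (nat list \<Rightarrow> nat list) set
                  \<Rightarrow> nat \<Rightarrow> triple set set set" where
  "PH d G H m = {coset d G H x | x. x \<in> grpd d G \<and> has_heads x m}"

text \<open>Splittings [1_n,w_0,1_n][caret_{k_1},w_1,1_{n+d-1}]...; spl n X: X a splitting with n heads.\<close>
inductive spl :: "nat \<Rightarrow> (nat list \<Rightarrow> nat list) set \<Rightarrow> (nat list \<Rightarrow> nat list) set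
                  \<Rightarrow> nat \<Rightarrow> triple set \<Rightarrow> bool"
  for d G H where
  spl_base: "w \<in> wr n H \<Longrightarrow> spl d G H n (cls d G (triv n, w, triv n))"
| spl_step: "spl d G H n X \<Longrightarrow> has_feet X m \<Longrightarrow> k < m \<Longrightarrow> w \<in> wr (m + d - 1) H \<Longrightarrow>
     spl d G H n (gmult d G X (cls d G (caretF d m k, w, triv (m + d - 1))))"

definition splitting :: "nat \<Rightarrow> (nat list \<Rightarrow> nat list) set \<Rightarrow> (nat list \<Rightarrow> nat list) set
                         \<Rightarrow> triple set \<Rightarrow> bool" where
  "splitting d G H X \<longleftrightarrow> (\<exists>n. spl d G H n X)"

definition ple :: "nat \<Rightarrow> (nat list \<Rightarrow> nat list) set \<Rightarrow> (nat list \<Rightarrow> nat list) set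
                   \<Rightarrow> triple set set \<Rightarrow> triple set set \<Rightarrow> bool" where
  "ple d G H P Q \<longleftrightarrow> (\<exists>x y. x \<in> grpd d G \<and> y \<in> grpd d G \<and> P = coset d G H x \<and> Q = coset d G H y
                       \<and> splitting d G H (gmult d G (ginv d G x) y))"

definition pless :: "nat \<Rightarrow> (nat list \<Rightarrow> nat list) set \<Rightarrow> (nat list \<Rightarrow> nat list) set
                   \<Rightarrow> triple set set \<Rightarrow> triple set set \<Rightarrow> bool" where
  "pless d G H P Q \<longleftrightarrow> ple d G H P Q \<and> P \<noteq> Q"

definition has_phi :: "nat \<Rightarrow> (nat list \<Rightarrow> nat list) set \<Rightarrow> (nat list \<Rightarrow> nat list) set
                       \<Rightarrow> triple set set \<Rightarrow> nat \<Rightarrow> bool" where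
  "has_phi d G H P q \<longleftrightarrow> (\<exists>x\<in>grpd d G. P = coset d G H x \<and> has_feet x q)"

end

theory Submission
  imports Defs
begin

(* A triple [F_-, f, F_+] acts as a partial map on pairs (root, word), and two valid triples are
   equivalent iff they have the same numbers of heads and feet and their maps agree on all long
   words; this makes products, inverses and cosets computable on representatives.

   An element of V_d that is a tree automorphism only rewrites the first D letters of a word, for
   some D, and D can be chosen uniformly on the finite set A.  The elements b h of G with b such a
   finitary map and h in H form a self-similar set M containing H and absorbing H on the right.
   Cloning along a splitting therefore keeps wreath products over M inside them, so if
   [x]_H < [y]_H with phi([y]_H) = q then y = x_0 [T, e, 1_q] for a fixed representative x_0 of
   [x]_H, a forest T with q leaves and e in S_q wr M.  Splitting e = (pi, b)(1, h) with the b_i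
   finitary and the h_i in H gives [y]_H = [x_0 [T, (pi, b), 1_q]]_H, and there are only finitely
   many such T, pi and b. *)

section \<open>Leaf addresses in forests\<close>

(* leaf_addr F i is the address (root index, path) of the i-th leaf of F.  locateF F r w follows
   the word w down from root r of F and returns the index of the leaf it passes through together
   with the remaining suffix, or None if w ends strictly inside F. *)

fun leaf_path :: "tree \<Rightarrow> nat \<Rightarrow> nat list"
and leaf_addr :: "tree list \<Rightarrow> nat \<Rightarrow> nat \<times> nat list" where
  "leaf_path Lf i = []"
| "leaf_path (Nd ts) i = (case leaf_addr ts i of (x, u) \<Rightarrow> x # u)"
| "leaf_addr [] i = (0, [])"
| "leaf_addr (t # ts) i = (if i < nleaves t then (0, leaf_path t i) else apfst Suc (leaf_addr ts (i - nleaves t)))"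

fun locate :: "tree \<Rightarrow> nat list \<Rightarrow> (nat \<times> nat list) option"
and locateF :: "tree list \<Rightarrow> nat \<Rightarrow> nat list \<Rightarrow> (nat \<times> nat list) option" where
  "locate Lf w = Some (0, w)"
| "locate (Nd ts) [] = None"
| "locate (Nd ts) (x # w) = locateF ts x w"
| "locateF [] x w = None"
| "locateF (t # ts) x w = (if x = 0 then locate t w
      else map_option (apfst ((+) (nleaves t))) (locateF ts (x - 1) w))"

fun height :: "tree \<Rightarrow> nat" and heightF :: "tree list \<Rightarrow> nat" where
  "height Lf = 0"
| "height (Nd ts) = Suc (heightF ts)"
| "heightF [] = 0"
| "heightF (t # ts) = max (height t) (heightF ts)"

lemma fleaves_Nil[simp]: "fleaves [] = 0" and fleaves_Cons[simp]: "fleaves (t # ts) = nleaves t + fleaves ts"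
  by (simp_all add: fleaves_def)

lemma nleaves_Nd: "nleaves (Nd ts) = fleaves ts"
  by (simp add: fleaves_def)

lemma sum_nleaves[simp]: "sum_list (map nleaves ts) = fleaves ts"
  by (simp add: fleaves_def)

lemma fleaves_append[simp]: "fleaves (F @ G) = fleaves F + fleaves G"
  unfolding fleaves_def by (simp del: sum_nleaves)

lemma locate_leaf_path:
  "i < nleaves t \<Longrightarrow> locate t (leaf_path t i @ v) = Some (i, v)"
  "i < fleaves ts \<Longrightarrow> leaf_addr ts i = (x, u) \<Longrightarrow> locateF ts x (u @ v) = Some (i, v)"
proof (induction t i and ts i arbitrary: v and x u v rule: leaf_path_leaf_addr.induct)
  case (1 i)
  then show ?case by simp
next
  case (2 ts i)
  then show ?case by (auto simp: nleaves_Nd split: prod.splits)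
next
  case (3 i)
  then show ?case by simp
next
  case (4 t ts i)
  show ?case
  proof (cases "i < nleaves t")
    case True
    then show ?thesis using 4 by auto
  next
    case False
    then obtain x' where "leaf_addr ts (i - nleaves t) = (x', u)" "x = Suc x'"
      using 4(4) by (cases "leaf_addr ts (i - nleaves t)") auto
    then show ?thesis using 4 False by auto
  qed
qed

lemma locate_Some:
  "locate t w = Some (j, v) \<Longrightarrow> j < nleaves t \<and> w = leaf_path t j @ v"
  "locateF ts x w = Some (j, v) \<Longrightarrow> j < fleaves ts \<and> (\<exists>u. leaf_addr ts j = (x, u) \<and> w = u @ v)"
proof (induction t w and ts x w arbitrary: j v and j v rule: locate_locateF.induct)
  case (1 w)
  then show ?case by simp
next
  case (2 ts)
  then show ?case by simp
next
  case (3 ts x w)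
  then show ?case by (auto simp: nleaves_Nd)
next
  case (4 x w)
  then show ?case by simp
next
  case (5 t ts x w)
  show ?case
  proof (cases "x = 0")
    case True
    then show ?thesis using 5 by auto
  next
    case False
    then obtain j' where j': "locateF ts (x - 1) w = Some (j', v)" "j = nleaves t + j'"
      using 5(3) by auto
    from 5(2)[OF False j'(1)] obtain u where "j' < fleaves ts" "leaf_addr ts j' = (x - 1, u)" "w = u @ v"
      by blast
    then show ?thesis using j' False by auto
  qed
qed

lemma leaf_addr_of_locateF: "locateF ts x u = Some (i, []) \<Longrightarrow> leaf_addr ts i = (x, u)"
  using locate_Some(2) by fastforce

lemma leaf_addr_inj: "i < fleaves ts \<Longrightarrow> i' < fleaves ts \<Longrightarrow> leaf_addr ts i = leaf_addr ts i' \<Longrightarrow> i = i'"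
  by (metis locate_leaf_path(2) option.inject prod.inject surj_pair)

lemma locateF_leaf_addr:
  "i < fleaves ts \<Longrightarrow> leaf_addr ts i = (x, u) \<Longrightarrow> locateF ts x u = Some (i, [])"
  using locate_leaf_path(2)[of i ts x u "[]"] by simp

lemma locateF_nth:
  "x < length ts \<Longrightarrow> locateF ts x w = map_option (apfst ((+) (fleaves (take x ts)))) (locate (ts ! x) w)"
proof (induction ts arbitrary: x)
  case Nil then show ?case by simp
next
  case (Cons t ts)
  show ?case
  proof (cases x)
    case 0 then show ?thesis by (simp add: option.map_ident apfst_def map_prod_def)
  next
    case (Suc x')
    then show ?thesis using Cons by (auto simp: option.map_comp comp_def apfst_def map_prod_def
       intro!: option.map_cong split: prod.splits)
  qed
qed

lemma locateF_ge: "length ts \<le> x \<Longrightarrow> locateF ts x w = None"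
  by (induction ts arbitrary: x) auto

lemma leaf_addr_root: "i < fleaves ts \<Longrightarrow> fst (leaf_addr ts i) < length ts"
proof (induction ts arbitrary: i)
  case Nil then show ?case by simp
next
  case (Cons t ts)
  show ?case
  proof (cases "i < nleaves t")
    case True then show ?thesis by simp
  next
    case False
    then have "fst (leaf_addr ts (i - nleaves t)) < length ts" using Cons by auto
    then show ?thesis using False by (cases "leaf_addr ts (i - nleaves t)") auto
  qed
qed

definition caret_shift :: "nat \<Rightarrow> nat \<Rightarrow> (nat \<times> nat list) option \<Rightarrow> (nat \<times> nat list) option" where
  "caret_shift d k oo = (case oo of None \<Rightarrow> None | Some (j, v) \<Rightarrow>
     if j < k then Some (j, v) else if k < j then Some (j + (d - 1), v)
     else (case v of [] \<Rightarrow> None | y # v' \<Rightarrow> if y < d then Some (k + y, v') else None))"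

lemma locateF_triv: "locateF (replicate d Lf) y w = (if y < d then Some (y, w) else None)"
  by (induction d arbitrary: y) auto

lemma fleaves_replicate: "fleaves (replicate d Lf) = d"
  by (induction d) auto

lemma fleaves_attach:
  "0 < d \<Longrightarrow> k < nleaves t \<Longrightarrow> nleaves (attach d k t) = nleaves t + (d - 1)"
  "0 < d \<Longrightarrow> k < fleaves ts \<Longrightarrow> fleaves (attachF d k ts) = fleaves ts + (d - 1)"
  by (induction d k t and d k ts rule: attach_attachF.induct) (auto simp: fleaves_replicate sum_list_replicate)

lemma length_attachF[simp]: "length (attachF d k ts) = length ts"
  by (induction ts arbitrary: k) auto

lemma full_attach:
  "full d t \<Longrightarrow> full d (attach d k t)"
  "(\<forall>t\<in>set ts. full d t) \<Longrightarrow> (\<forall>t\<in>set (attachF d k ts). full d t)"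
  by (induction d k t and d k ts rule: attach_attachF.induct) auto

lemma locate_attach:
  "0 < d \<Longrightarrow> k < nleaves t \<Longrightarrow> locate (attach d k t) w = caret_shift d k (locate t w)"
  "0 < d \<Longrightarrow> k < fleaves ts \<Longrightarrow> locateF (attachF d k ts) x w = caret_shift d k (locateF ts x w)"
proof (induction d k t and d k ts arbitrary: w and x w rule: attach_attachF.induct)
  case (1 d k)
  then show ?case by (cases w) (auto simp: caret_shift_def locateF_triv)
next
  case (2 d k ts)
  then show ?case by (cases w) (auto simp: caret_shift_def nleaves_Nd)
next
  case (3 d k)
  then show ?case by simp
next
  case (4 d k t ts)
  show ?case
  proof (cases "k < nleaves t")
    case True
    show ?thesis
    proof (cases "x = 0")
      case True
      then show ?thesis using 4 \<open>k < nleaves t\<close> by simp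
    next
      case False
      then show ?thesis using True fleaves_attach(1)[OF 4(3) True]
        by (cases "locateF ts (x - 1) w") (auto simp: caret_shift_def)
    qed
  next
    case False
    show ?thesis
    proof (cases "x = 0")
      case True
      then show ?thesis using False locate_Some(1)[of t w]
        by (cases "locate t w") (auto simp: caret_shift_def)
    next
      case xF: False
      have IH: "locateF (attachF d (k - nleaves t) ts) (x - 1) w = caret_shift d (k - nleaves t) (locateF ts (x - 1) w)"
        using 4(2)[OF False] 4(3,4) False by simp
      show ?thesis using False xF IH
        by (cases "locateF ts (x - 1) w") (auto simp: caret_shift_def split: list.splits)
    qed
  qed
qed

lemma leaf_addr_attachF:
  assumes "0 < d" "k < fleaves ts" "i < fleaves ts + (d - 1)"
  shows "leaf_addr (attachF d k ts) i = (if i < k then leaf_addr ts i else if i < k + d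
            then apsnd (\<lambda>u. u @ [i - k]) (leaf_addr ts k) else leaf_addr ts (i - (d - 1)))"
proof -
  consider (a) "i < k" | (b) "k \<le> i" "i < k + d" | (c) "k + d \<le> i" by linarith
  then show ?thesis
  proof cases
    case a
    obtain x u where xu: "leaf_addr ts i = (x, u)" by (cases "leaf_addr ts i")
    have "locateF ts x u = Some (i, [])" using locateF_leaf_addr[OF _ xu] a assms by simp
    then have "locateF (attachF d k ts) x u = Some (i, [])"
      using locate_attach(2)[OF assms(1,2)] a by (simp add: caret_shift_def)
    then show ?thesis using leaf_addr_of_locateF a xu by simp
  next
    case b
    obtain x u where xu: "leaf_addr ts k = (x, u)" by (cases "leaf_addr ts k")
    have "locateF ts x (u @ [i - k]) = Some (k, [i - k])" using locate_leaf_path(2)[OF assms(2) xu] .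
    then have "locateF (attachF d k ts) x (u @ [i - k]) = Some (i, [])"
      using locate_attach(2)[OF assms(1,2)] b by (simp add: caret_shift_def)
    then show ?thesis using leaf_addr_of_locateF b xu by simp
  next
    case c
    obtain x u where xu: "leaf_addr ts (i - (d - 1)) = (x, u)" by (cases "leaf_addr ts (i - (d - 1))")
    have "locateF ts x u = Some (i - (d - 1), [])" using locateF_leaf_addr[OF _ xu] c assms by simp
    moreover have "k < i - (d - 1)" "i - (d - 1) + (d - 1) = i" using c assms(1) by linarith+
    ultimately have "locateF (attachF d k ts) x u = Some (i, [])"
      using locate_attach(2)[OF assms(1,2)] by (simp add: caret_shift_def)
    then show ?thesis using leaf_addr_of_locateF c xu assms(1) by simp
  qed
qed

lemma locate_total:
  "full d t \<Longrightarrow> set w \<subseteq> {0..<d} \<Longrightarrow> height t \<le> length w \<Longrightarrow> locate t w \<noteq> None"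
  "(\<forall>t\<in>set ts. full d t) \<Longrightarrow> x < length ts \<Longrightarrow> set w \<subseteq> {0..<d} \<Longrightarrow> heightF ts \<le> length w \<Longrightarrow> locateF ts x w \<noteq> None"
proof (induction t w and ts x w rule: locate_locateF.induct)
  case (5 t ts x w)
  show ?case
  proof (cases "x = 0")
    case True then show ?thesis using 5 by auto
  next
    case False
    then have "locateF ts (x - 1) w \<noteq> None" using 5 by auto
    then show ?thesis using False by auto
  qed
qed auto

lemma leaf_path_length:
  "length (leaf_path t i) \<le> height t"
  "length (snd (leaf_addr ts i)) \<le> heightF ts"
proof (induction t i and ts i rule: leaf_path_leaf_addr.induct)
  case (2 ts i) then show ?case by (cases "leaf_addr ts i") auto
next
  case (4 t ts i) then show ?case by (cases "leaf_addr ts (i - nleaves t)") auto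
qed auto

lemma leaf_path_set:
  "full d t \<Longrightarrow> i < nleaves t \<Longrightarrow> set (leaf_path t i) \<subseteq> {0..<d}"
  "(\<forall>t\<in>set ts. full d t) \<Longrightarrow> i < fleaves ts \<Longrightarrow> set (snd (leaf_addr ts i)) \<subseteq> {0..<d}"
proof (induction t i and ts i rule: leaf_path_leaf_addr.induct)
  case (2 ts i)
  have a: "fst (leaf_addr ts i) < d" using leaf_addr_root[of i ts] 2 by (simp add: nleaves_Nd)
  have b: "set (snd (leaf_addr ts i)) \<subseteq> {0..<d}" using 2 by (simp add: nleaves_Nd)
  show ?case using a b by (cases "leaf_addr ts i") auto
next
  case (4 t ts i) then show ?case by (cases "leaf_addr ts (i - nleaves t)") auto
qed auto

lemma length_le_locateF: "locateF ts x w = Some (j, v) \<Longrightarrow> length w \<le> heightF ts + length v"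
  using locate_Some(2)[of ts x w j v] leaf_path_length(2)[of ts j] by auto

lemma locateF_suffix: "locateF ts x w = Some (j, v) \<Longrightarrow> set v \<subseteq> set w"
  using locate_Some(2)[of ts x w j v] by auto


lemma leaf_addr_triv: "r < n \<Longrightarrow> leaf_addr (replicate n Lf) r = (r, [])"
  by (induction n arbitrary: r) (auto simp: less_Suc_eq_0_disj)

section \<open>Tree automorphisms\<close>

lemma words_iff: "w \<in> words d \<longleftrightarrow> set w \<subseteq> {0..<d}"
  by (auto simp: words_def)

lemma leaf_addr_words: "forest d F \<Longrightarrow> i < fleaves F \<Longrightarrow> snd (leaf_addr F i) \<in> words d"
  using leaf_path_set(2)[of F d i] by (auto simp: forest_def words_iff)

lemma aut_words: "f \<in> aut d \<Longrightarrow> w \<in> words d \<Longrightarrow> f w \<in> words d"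
  unfolding aut_def bij_betw_def by auto

lemma aut_length: "f \<in> aut d \<Longrightarrow> w \<in> words d \<Longrightarrow> length (f w) = length w"
  unfolding aut_def by auto

lemma aut_outside: "f \<in> aut d \<Longrightarrow> w \<notin> words d \<Longrightarrow> f w = w"
  unfolding aut_def by auto

lemma aut_inj_on: "f \<in> aut d \<Longrightarrow> inj_on f (words d)"
  unfolding aut_def bij_betw_def by auto

lemma aut_take_prefix:
  "f \<in> aut d \<Longrightarrow> u \<in> words d \<Longrightarrow> v \<in> words d \<Longrightarrow> take (length u) (f (u @ v)) = f u"
  unfolding aut_def by auto

lemma aut_nth_take:
  assumes "f \<in> aut d" "w \<in> words d" "i < length w"
  shows "f w ! i = f (take (Suc i) w) ! i"
proof -
  have "take (Suc i) w \<in> words d" "drop (Suc i) w \<in> words d" using assms(2)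
    by (auto simp: words_iff dest: in_set_takeD in_set_dropD)
  from aut_take_prefix[OF assms(1) this]
  have "take (Suc i) (f w) = f (take (Suc i) w)" using assms(3) by simp
  moreover have "i < length (f w)" using aut_length[OF assms(1,2)] assms(3) by simp
  ultimately show ?thesis by (metis lessI nth_take)
qed

lemma wreath_recursion:
  assumes "f \<in> aut d" "x < d" "v \<in> words d"
  shows "f (x # v) = rho d f x # state d f x v" "rho d f x < d"
proof -
  have x: "[x] \<in> words d" and xv: "x # v \<in> words d" using assms by (simp_all add: words_iff)
  obtain y where y: "f [x] = [y]"
    using aut_length[OF assms(1) x] by (cases "f [x]") auto
  have "f [x] \<in> words d" using aut_words[OF assms(1) x] .
  then show "rho d f x < d" using y assms by (simp add: rho_def words_iff)
  have "take 1 (f (x # v)) = [y]" using aut_take_prefix[OF assms(1) x assms(3)] y by simp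
  moreover have "f (x # v) \<noteq> []" using aut_length[OF assms(1) xv] by auto
  ultimately have "f (x # v) = y # tl (f (x # v))" by (cases "f (x # v)") auto
  then show "f (x # v) = rho d f x # state d f x v" using y assms by (simp add: rho_def state_def)
qed

lemma aut_singleton:
  assumes "f \<in> aut d" "x < d"
  shows "f [x] = [rho d f x]"
proof -
  have "f [x] = rho d f x # state d f x []" using wreath_recursion(1)[OF assms] by (simp add: words_def)
  moreover have "length (f [x]) = 1" using aut_length[OF assms(1)] assms(2) by (simp add: words_def)
  ultimately show ?thesis by simp
qed

lemma permutes_if_inj_on_endo:
  assumes "finite S" "f ` S \<subseteq> S" "inj_on f S" "\<And>x. x \<notin> S \<Longrightarrow> f x = x"
  shows "f permutes S"
  using assms by (metis bij_betw_def bij_imp_permutes endo_inj_surj)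

lemma rho_permutes:
  assumes f: "f \<in> aut d"
  shows "rho d f permutes {0..<d}"
proof (rule permutes_if_inj_on_endo)
  show "rho d f ` {0..<d} \<subseteq> {0..<d}" using wreath_recursion(2)[OF f, of _ "[]"] by (auto simp: words_iff)
  show "inj_on (rho d f) {0..<d}"
  proof (rule inj_onI)
    fix x y assume "x \<in> {0..<d}" "y \<in> {0..<d}" "rho d f x = rho d f y"
    moreover from this have "f [x] = f [y]" using aut_singleton[OF f] by simp
    ultimately show "x = y" using aut_inj_on[OF f] by (auto simp: words_iff dest: inj_onD)
  qed
qed (simp_all add: rho_def)

lemma state_words: "f \<in> aut d \<Longrightarrow> x < d \<Longrightarrow> v \<in> words d \<Longrightarrow> state d f x v \<in> words d"
  using aut_words[of f d "x # v"] by (cases "f (x # v)") (auto simp: state_def words_iff)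

lemma state_comp:
  assumes "h \<in> aut d" "x < d"
  shows "state d (g \<circ> h) x = state d g (rho d h x) \<circ> state d h x"
proof
  fix w
  show "state d (g \<circ> h) x w = (state d g (rho d h x) \<circ> state d h x) w"
  proof (cases "w \<in> words d")
    case True
    then have "state d (g \<circ> h) x w = tl (g (rho d h x # state d h x w))"
      using wreath_recursion(1)[OF assms True] by (simp add: state_def)
    then show ?thesis using state_words[OF assms True] by (simp add: state_def)
  qed (simp add: state_def)
qed

lemma aut_ainv: "f \<in> aut d \<Longrightarrow> w \<in> words d \<Longrightarrow> f (ainv d f w) = w"
  unfolding aut_def ainv_def by (auto intro: bij_betw_inv_into_right)

lemma aut_comp_ainv: "f \<in> aut d \<Longrightarrow> f \<circ> ainv d f = id"
  by (rule ext) (metis aut_ainv aut_outside ainv_def comp_apply id_apply)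


section \<open>Wreath products and cloning\<close>

lemma wr_mono: "S \<subseteq> S' \<Longrightarrow> w \<in> wr n S \<Longrightarrow> w \<in> wr n S'"
  by (auto simp: wr_def)

lemma finite_wr: "finite S \<Longrightarrow> finite (wr n S)"
proof -
  assume "finite S"
  then have "finite ({\<sigma>. \<sigma> permutes {0..<n}} \<times> {fs. set fs \<subseteq> S \<and> length fs = n})"
    using finite_permutations[of "{0..<n}"] finite_lists_length_eq[of S n] by simp
  then show ?thesis by (rule finite_subset[rotated]) (auto simp: wr_def)
qed

lemma wmult_wr:
  assumes "\<forall>f\<in>S. \<forall>g\<in>S'. f \<circ> g \<in> S" "(\<sigma>, fs) \<in> wr n S" "(\<tau>, gs) \<in> wr n S'"
  shows "wmult (\<sigma>, fs) (\<tau>, gs) \<in> wr n S"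
proof -
  have a: "\<sigma> permutes {0..<n}" "length fs = n" "set fs \<subseteq> S"
    "\<tau> permutes {0..<n}" "length gs = n" "set gs \<subseteq> S'"
    using assms by (auto simp: wr_def)
  have "fs ! (\<tau> i) \<circ> gs ! i \<in> S" if "i < n" for i
  proof -
    have "\<tau> i < n" using permutes_in_image[OF a(4)] that by simp
    then show ?thesis using assms(1) subsetD[OF a(3) nth_mem] subsetD[OF a(6) nth_mem] a that by simp
  qed
  then show ?thesis using a by (auto simp: wmult_def wr_def intro: permutes_compose)
qed

lemma winv_wr:
  assumes "\<forall>f\<in>S. ainv d f \<in> S" "(\<sigma>, fs) \<in> wr n S"
  shows "winv d (\<sigma>, fs) \<in> wr n S"
proof -
  have a: "\<sigma> permutes {0..<n}" "length fs = n" "set fs \<subseteq> S" using assms by (auto simp: wr_def)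
  have p: "inv \<sigma> permutes {0..<n}" using permutes_inv[OF a(1)] .
  have "ainv d (fs ! (inv \<sigma> i)) \<in> S" if "i < n" for i
  proof -
    have "inv \<sigma> i < n" using permutes_in_image[OF p] that by simp
    then show ?thesis using assms(1) subsetD[OF a(3) nth_mem] a by simp
  qed
  then show ?thesis using a p by (auto simp: winv_def wr_def)
qed

lemma lift_permutes:
  assumes \<tau>: "\<tau> permutes {0..<d}" and "k + d \<le> N"
  shows "lift d k \<tau> permutes {0..<N}"
proof -
  have "\<And>j. j < d \<Longrightarrow> \<tau> j < d" using \<tau> permutes_in_image by fastforce
  moreover have "\<And>i j. \<tau> i = \<tau> j \<longleftrightarrow> i = j" using permutes_inj[OF \<tau>] by (auto dest: injD)
  ultimately have "lift d k \<tau> permutes {k..<k + d}"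
    by (intro permutes_if_inj_on_endo) (auto simp: lift_def inj_on_def)
  then show ?thesis by (rule permutes_subset) (use assms in auto)
qed

(* Off the block k..k+d-1, varsigma collapses the block, applies \<sigma> and reopens the block at
   \<sigma> k. *)

lemma varsigma_permutes:
  assumes \<sigma>: "\<sigma> permutes {0..<n}" and k: "k < n" and d: "0 < d"
  shows "varsigma d n \<sigma> k permutes {0..<n + d - 1}"
proof -
  define sh where "sh = (\<lambda>v. if v < \<sigma> k then v else v + (d - 1))"
  define c where "c = (\<lambda>i::nat. if i < k then i else i - (d - 1))"
  define block where "block = {k..<k + d}"
  define rest where "rest = {0..<n + d - 1} - block"
  have \<sigma>_lt: "\<And>i. i < n \<Longrightarrow> \<sigma> i < n" using \<sigma> permutes_in_image by fastforce
  have \<sigma>_eq: "\<And>i j. \<sigma> i = \<sigma> j \<longleftrightarrow> i = j" using permutes_inj[OF \<sigma>] by (auto dest: injD)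
  have on_block: "\<And>i. i \<in> block \<Longrightarrow> varsigma d n \<sigma> k i = \<sigma> k + (i - k)"
    using k d by (auto simp: varsigma_def block_def)
  have on_rest: "\<And>i. i \<in> rest \<Longrightarrow> varsigma d n \<sigma> k i = sh (\<sigma> (c i))"
    using k d by (auto simp: varsigma_def rest_def block_def sh_def c_def Let_def)
  have c_rest: "\<And>i. i \<in> rest \<Longrightarrow> c i < n \<and> c i \<noteq> k"
    using k d by (auto simp: rest_def block_def c_def)
  have "inj_on (varsigma d n \<sigma> k) (block \<union> rest)"
  proof (subst inj_on_Un, intro conjI)
    show "inj_on (varsigma d n \<sigma> k) block" by (auto simp: inj_on_def on_block block_def)
    show "inj_on (varsigma d n \<sigma> k) rest"
      by (auto simp: inj_on_def on_rest \<sigma>_eq sh_def c_def rest_def block_def split: if_splits)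
    have "sh (\<sigma> (c j)) \<noteq> \<sigma> k + (i - k)" if "i \<in> block" "j \<in> rest" for i j
    proof -
      have "\<sigma> (c j) \<noteq> \<sigma> k" using c_rest[OF that(2)] \<sigma>_eq by blast
      then show ?thesis using that(1) by (auto simp: sh_def block_def)
    qed
    then show "varsigma d n \<sigma> k ` (block - rest) \<inter> varsigma d n \<sigma> k ` (rest - block) = {}"
      by (fastforce simp: on_block on_rest)
  qed
  moreover have "varsigma d n \<sigma> k i < n + d - 1" if "i \<in> block \<union> rest" for i
  proof (cases "i \<in> block")
    case True then show ?thesis using \<sigma>_lt[OF k] by (auto simp: on_block block_def)
  next
    case False
    then have "\<sigma> (c i) < n" using that c_rest \<sigma>_lt by blast
    then show ?thesis using that False d by (auto simp: on_rest sh_def)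
  qed
  moreover have "block \<union> rest = {0..<n + d - 1}" using k by (auto simp: rest_def block_def)
  moreover have "varsigma d n \<sigma> k i = i" if "i \<notin> {0..<n + d - 1}" for i
    using that k d by (auto simp: varsigma_def Let_def)
  ultimately show ?thesis by (intro permutes_if_inj_on_endo) auto
qed

lemma kappa_wr:
  assumes "(\<sigma>, fs) \<in> wr n S" "k < n" "0 < d" "S \<subseteq> aut d" "self_similar d S"
  shows "kappa d (\<sigma>, fs) k \<in> wr (n + d - 1) S"
proof -
  have s: "\<sigma> permutes {0..<n}" and l: "length fs = n" and g: "set fs \<subseteq> S"
    using assms(1) by (auto simp: wr_def)
  have fk: "fs ! k \<in> S" using g l assms(2) by auto
  have "varsigma d n \<sigma> k permutes {0..<n + d - 1}" using varsigma_permutes[OF s assms(2,3)] .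
  moreover have "lift d k (rho d (fs ! k)) permutes {0..<n + d - 1}"
    using lift_permutes[OF rho_permutes] fk assms by auto
  moreover have "set (map (state d (fs ! k)) [0..<d]) \<subseteq> S"
    using assms(5) fk by (auto simp: self_similar_def)
  moreover have "set (take k fs) \<subseteq> S" "set (drop (Suc k) fs) \<subseteq> S"
    using g by (auto dest: in_set_takeD in_set_dropD)
  ultimately show ?thesis using l assms(2,3)
    by (auto simp: wr_def kappa_def intro: permutes_compose)
qed

section \<open>Triples as partial maps\<close>

lemma valid_iff: "valid d G (Fm, (\<sigma>, fs), Fp) \<longleftrightarrow> forest d Fm \<and> forest d Fp \<and> fleaves Fm = length fs
   \<and> fleaves Fp = length fs \<and> \<sigma> permutes {0..<length fs} \<and> set fs \<subseteq> G"
  by (simp add: valid_def wr_def)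

lemma forest_attachF: "forest d F \<Longrightarrow> forest d (attachF d k F)"
  using full_attach(2) by (auto simp: forest_def)

lemma valid_expand:
  assumes "valid d G t" "k < length (snd (fst (snd t)))" "0 < d" "G \<subseteq> aut d" "self_similar d G"
  shows "valid d G (expand d t k)"
proof -
  obtain Fm \<sigma> fs Fp where t: "t = (Fm, (\<sigma>, fs), Fp)" by (cases t) auto
  have v: "forest d Fm" "forest d Fp" "fleaves Fm = length fs" "fleaves Fp = length fs"
     "\<sigma> permutes {0..<length fs}" "set fs \<subseteq> G" using assms(1) by (auto simp: t valid_iff)
  have k: "k < length fs" using assms(2) t by simp
  have sk: "\<sigma> k < length fs" using v(5) k permutes_in_image by fastforce
  have kw: "kappa d (\<sigma>, fs) k \<in> wr (length fs + d - 1) G"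
    using kappa_wr[of \<sigma> fs "length fs" G k d] v k assms by (auto simp: wr_def)
  then have "length (snd (kappa d (\<sigma>, fs) k)) = length fs + d - 1" by (auto simp: wr_def)
  then show ?thesis
    using kw v k sk assms(3) fleaves_attach(2)[of d k Fp] fleaves_attach(2)[of d "\<sigma> k" Fm]
    by (auto simp: t expand_def valid_def forest_attachF)
qed

lemma kappa_old_leaf:
  assumes "j < length fs" "k < length fs" "j \<noteq> k" "0 < d"
  defines "j' \<equiv> if j < k then j else j + (d - 1)"
  shows "snd (kappa d (\<sigma>, fs) k) ! j' = fs ! j"
    and "fst (kappa d (\<sigma>, fs) k) j' = (if \<sigma> j < \<sigma> k then \<sigma> j else \<sigma> j + (d - 1))"
proof -
  have lift: "lift d k \<rho> j' = j'" for \<rho> using assms by (auto simp: lift_def j'_def)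
  consider "j < k" | "k < j" using assms by linarith
  then show "fst (kappa d (\<sigma>, fs) k) j' = (if \<sigma> j < \<sigma> k then \<sigma> j else \<sigma> j + (d - 1))"
  proof cases
    case 1 then show ?thesis using lift by (simp add: kappa_def varsigma_def j'_def)
  next
    case 2
    then have "\<not> j + (d - 1) < k + d" "j + (d - 1) < length fs + d - 1" using assms by linarith+
    then show ?thesis using 2 lift by (simp add: kappa_def varsigma_def j'_def)
  qed
  show "snd (kappa d (\<sigma>, fs) k) ! j' = fs ! j"
  proof (cases "j < k")
    case False
    then have "\<not> j + (d - 1) < k" "\<not> j + (d - 1) - k < d" "Suc k + (j + (d - 1) - k - d) = j"
      using assms by linarith+
    then show ?thesis using assms False by (simp add: kappa_def j'_def nth_append)
  qed (use assms in \<open>simp add: kappa_def j'_def nth_append\<close>)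
qed

lemma kappa_new_leaf:
  assumes "k < length fs" "y < d" "fs ! k \<in> aut d"
  shows "snd (kappa d (\<sigma>, fs) k) ! (k + y) = state d (fs ! k) y"
    and "fst (kappa d (\<sigma>, fs) k) (k + y) = \<sigma> k + rho d (fs ! k) y"
proof -
  have "rho d (fs ! k) y < d" using wreath_recursion(2)[OF assms(3,2), of "[]"] by (simp add: words_def)
  then show "fst (kappa d (\<sigma>, fs) k) (k + y) = \<sigma> k + rho d (fs ! k) y"
    using assms by (simp add: kappa_def varsigma_def lift_def)
  show "snd (kappa d (\<sigma>, fs) k) ! (k + y) = state d (fs ! k) y"
    using assms by (simp add: kappa_def nth_append)
qed

definition tmap :: "triple \<Rightarrow> nat \<Rightarrow> nat list \<Rightarrow> (nat \<times> nat list) option" where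
  "tmap t r w = (case t of (Fm, (\<sigma>, fs), Fp) \<Rightarrow> (case locateF Fp r w of None \<Rightarrow> None
     | Some (j, v) \<Rightarrow> Some (apsnd (\<lambda>u. u @ (fs ! j) v) (leaf_addr Fm (\<sigma> j)))))"

lemma tmap_None: "length Fp \<le> r \<Longrightarrow> tmap (Fm, f, Fp) r w = None"
  by (cases f) (simp add: tmap_def locateF_ge)

lemma tmap_total:
  assumes "valid d G (Fm, f, Fp)" "w \<in> words d" "r < length Fp" "heightF Fp \<le> length w"
  shows "tmap (Fm, f, Fp) r w \<noteq> None"
proof -
  have "forest d Fp" using assms(1) by (cases f) (simp add: valid_iff)
  then have "locateF Fp r w \<noteq> None"
    using locate_total(2)[of Fp d r w] assms by (auto simp: forest_def words_iff)
  then show ?thesis by (cases f) (auto simp: tmap_def)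
qed

lemma tmap_expand:
  assumes "valid d G t" "G \<subseteq> aut d" "0 < d" "k < length (snd (fst (snd t)))" "w \<in> words d"
    and ne: "tmap (expand d t k) r w \<noteq> None"
  shows "tmap (expand d t k) r w = tmap t r w"
proof -
  obtain Fm \<sigma> fs Fp where t: "t = (Fm, (\<sigma>, fs), Fp)" by (cases t) auto
  have v: "fleaves Fm = length fs" "fleaves Fp = length fs" "\<sigma> permutes {0..<length fs}" "set fs \<subseteq> G"
    using assms(1) by (auto simp: t valid_iff)
  have k: "k < length fs" using assms(4) t by simp
  have \<sigma>_lt: "\<And>i. i < length fs \<Longrightarrow> \<sigma> i < length fs" using v(3) permutes_in_image by fastforce
  obtain \<tau> gs where \<tau>: "kappa d (\<sigma>, fs) k = (\<tau>, gs)" by fastforce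
  have ex: "expand d t k = (attachF d (\<sigma> k) Fm, (\<tau>, gs), attachF d k Fp)"
    by (simp add: t expand_def \<tau>)
  have la: "locateF (attachF d k Fp) r w = caret_shift d k (locateF Fp r w)"
    using locate_attach(2)[OF assms(3)] k v(2) by simp
  have addr: "\<And>i. i < length fs + (d - 1) \<Longrightarrow> leaf_addr (attachF d (\<sigma> k) Fm) i =
      (if i < \<sigma> k then leaf_addr Fm i else if i < \<sigma> k + d
       then apsnd (\<lambda>u. u @ [i - \<sigma> k]) (leaf_addr Fm (\<sigma> k)) else leaf_addr Fm (i - (d - 1)))"
    using leaf_addr_attachF[OF assms(3)] \<sigma>_lt k v(1) by simp
  obtain j v' where jv: "locateF Fp r w = Some (j, v')"
    using ne la by (cases "locateF Fp r w") (auto simp: tmap_def ex caret_shift_def)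
  have j: "j < length fs" using locate_Some(2)[OF jv] v(2) by simp
  have old: "tmap t r w = Some (apsnd (\<lambda>u. u @ (fs ! j) v') (leaf_addr Fm (\<sigma> j)))"
    by (simp add: tmap_def t jv)
  show ?thesis
  proof (cases "j = k")
    case False
    then have "\<sigma> j \<noteq> \<sigma> k" using permutes_inj[OF v(3)] by (auto dest: injD)
    then have "leaf_addr (attachF d (\<sigma> k) Fm) (if \<sigma> j < \<sigma> k then \<sigma> j else \<sigma> j + (d - 1))
        = leaf_addr Fm (\<sigma> j)"
      using addr[of "\<sigma> j"] addr[of "\<sigma> j + (d - 1)"] \<sigma>_lt[OF j] assms(3) by auto
    then show ?thesis
      using kappa_old_leaf[OF j k False assms(3), where \<sigma>=\<sigma>] False jv la old \<tau>
      by (auto simp: tmap_def ex caret_shift_def)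
  next
    case True
    obtain y v'' where yv: "v' = y # v''" "y < d"
      using ne la jv True by (auto simp: tmap_def ex caret_shift_def split: list.splits if_splits)
    have fk: "fs ! k \<in> aut d" using v(4) k assms(2) nth_mem by blast
    have v'': "v'' \<in> words d" using locateF_suffix[OF jv] assms(5) yv by (auto simp: words_iff)
    note rec = wreath_recursion[OF fk yv(2) v'']
    have "leaf_addr (attachF d (\<sigma> k) Fm) (\<sigma> k + rho d (fs ! k) y)
        = apsnd (\<lambda>u. u @ [rho d (fs ! k) y]) (leaf_addr Fm (\<sigma> k))"
      using addr[of "\<sigma> k + rho d (fs ! k) y"] rec(2) \<sigma>_lt[OF k] by simp
    then show ?thesis
      using kappa_new_leaf[OF k yv(2) fk, of \<sigma>] True jv la old \<tau> yv rec(1)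
      by (auto simp: tmap_def ex caret_shift_def apsnd_def map_prod_def split: prod.splits)
  qed
qed

lemma tmap_out:
  assumes "valid d G t" "G \<subseteq> aut d" "w \<in> words d" "tmap t r w = Some (r', w')"
  shows "w' \<in> words d \<and> length w \<le> length w' + heightF (snd (snd t))"
proof -
  obtain Fm \<sigma> fs Fp where t: "t = (Fm, (\<sigma>, fs), Fp)" by (cases t) auto
  have v: "forest d Fm" "fleaves Fm = length fs" "fleaves Fp = length fs"
     "\<sigma> permutes {0..<length fs}" "set fs \<subseteq> G" using assms(1) by (auto simp: t valid_iff)
  obtain j v' where jv: "locateF Fp r w = Some (j, v')"
    using assms(4) by (cases "locateF Fp r w") (auto simp: t tmap_def)
  have j: "j < length fs" using locate_Some(2)[OF jv] v(3) by simp
  have fj: "fs ! j \<in> aut d" using v(5) assms(2) j nth_mem by blast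
  have v': "v' \<in> words d" using locateF_suffix[OF jv] assms(3) by (auto simp: words_iff)
  have u: "snd (leaf_addr Fm (\<sigma> j)) \<in> words d"
    using leaf_addr_words[OF v(1)] permutes_in_image[OF v(4)] j v(2) by simp
  have w': "w' = snd (leaf_addr Fm (\<sigma> j)) @ (fs ! j) v'"
    using assms(4) by (cases "leaf_addr Fm (\<sigma> j)") (auto simp: t tmap_def jv)
  show ?thesis
    using w' u aut_words[OF fj v'] length_le_locateF[OF jv] aut_length[OF fj v']
    by (simp add: t words_iff)
qed

lemma tmap_root:
  assumes "valid d G t" "tmap t r w = Some (r', w')"
  shows "r' < length (fst t)"
proof -
  obtain Fm \<sigma> fs Fp where t: "t = (Fm, (\<sigma>, fs), Fp)" by (cases t) auto
  have a: "fleaves Fm = length fs" "fleaves Fp = length fs" "\<sigma> permutes {0..<length fs}"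
    using assms(1) by (auto simp: t valid_iff)
  obtain j v where jv: "locateF Fp r w = Some (j, v)"
    using assms(2) by (cases "locateF Fp r w") (auto simp: tmap_def t)
  have "j < length fs" using locate_Some(2)[OF jv] a by simp
  then have "fst (leaf_addr Fm (\<sigma> j)) < length Fm"
    using leaf_addr_root permutes_in_image[OF a(3)] a by simp
  moreover have "r' = fst (leaf_addr Fm (\<sigma> j))"
    using assms(2) jv by (cases "leaf_addr Fm (\<sigma> j)") (auto simp: tmap_def t)
  ultimately show ?thesis using t by simp
qed

section \<open>Eventual equality of partial maps\<close>

type_synonym pmap = "nat \<Rightarrow> nat list \<Rightarrow> (nat \<times> nat list) option"

definition eventually_eq :: "nat \<Rightarrow> pmap \<Rightarrow> pmap \<Rightarrow> bool" where
  "eventually_eq d f g \<longleftrightarrow> (\<exists>N. \<forall>r w. w \<in> words d \<longrightarrow> N \<le> length w \<longrightarrow> f r w = g r w)"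

definition pcomp :: "pmap \<Rightarrow> pmap \<Rightarrow> pmap" where
  "pcomp f g r w = Option.bind (g r w) (\<lambda>(r', w'). f r' w')"

definition bounded_loss :: "nat \<Rightarrow> pmap \<Rightarrow> bool" where
  "bounded_loss d g \<longleftrightarrow> (\<exists>H. \<forall>r w r' w'. w \<in> words d \<longrightarrow> g r w = Some (r', w')
     \<longrightarrow> w' \<in> words d \<and> length w \<le> length w' + H)"

lemma eventually_eq_refl: "eventually_eq d f f"
  by (auto simp: eventually_eq_def)

lemma eventually_eq_sym: "eventually_eq d f g \<Longrightarrow> eventually_eq d g f"
  by (auto simp: eventually_eq_def) metis

lemma eventually_eq_trans: "eventually_eq d f g \<Longrightarrow> eventually_eq d g h \<Longrightarrow> eventually_eq d f h"
  unfolding eventually_eq_def by (metis max.bounded_iff)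

lemma eventually_eqI: "(\<And>r w. w \<in> words d \<Longrightarrow> f r w = g r w) \<Longrightarrow> eventually_eq d f g"
  by (auto simp: eventually_eq_def)

lemma pcomp_assoc: "pcomp (pcomp f g) h = pcomp f (pcomp g h)"
proof (intro ext)
  fix r w
  show "pcomp (pcomp f g) h r w = pcomp f (pcomp g h) r w"
    by (cases "h r w") (auto simp: pcomp_def split: prod.splits)
qed

lemma bounded_loss_pcomp: "bounded_loss d f \<Longrightarrow> bounded_loss d g \<Longrightarrow> bounded_loss d (pcomp f g)"
proof -
  assume "bounded_loss d f" "bounded_loss d g"
  then obtain H1 H2 where
    H1: "\<forall>r w r' w'. w \<in> words d \<longrightarrow> f r w = Some (r', w') \<longrightarrow> w' \<in> words d \<and> length w \<le> length w' + H1"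
    and H2: "\<forall>r w r' w'. w \<in> words d \<longrightarrow> g r w = Some (r', w') \<longrightarrow> w' \<in> words d \<and> length w \<le> length w' + H2"
    by (auto simp: bounded_loss_def)
  show ?thesis unfolding bounded_loss_def
  proof (intro exI[of _ "H1 + H2"] allI impI)
    fix r w r' w' assume "w \<in> words d" "pcomp f g r w = Some (r', w')"
    moreover from this obtain r1 w1 where "g r w = Some (r1, w1)" "f r1 w1 = Some (r', w')"
      by (cases "g r w") (auto simp: pcomp_def)
    ultimately have "w1 \<in> words d \<and> length w \<le> length w1 + H2" using H2 by blast
    then show "w' \<in> words d \<and> length w \<le> length w' + (H1 + H2)"
      using H1 \<open>f r1 w1 = Some (r', w')\<close> by fastforce
  qed
qed

(* Bounded loss of the inner map is what lets agreement on long words propagate through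
   composition. *)

lemma pcomp_cong:
  assumes "eventually_eq d f f1" "eventually_eq d g g1" "bounded_loss d g1"
  shows "eventually_eq d (pcomp f g) (pcomp f1 g1)"
proof -
  obtain Na where Na: "\<forall>r w. w \<in> words d \<longrightarrow> Na \<le> length w \<longrightarrow> f r w = f1 r w"
    using assms(1) by (auto simp: eventually_eq_def)
  obtain Nb where Nb: "\<forall>r w. w \<in> words d \<longrightarrow> Nb \<le> length w \<longrightarrow> g r w = g1 r w"
    using assms(2) by (auto simp: eventually_eq_def)
  obtain H where H: "\<forall>r w r' w'. w \<in> words d \<longrightarrow> g1 r w = Some (r', w')
      \<longrightarrow> w' \<in> words d \<and> length w \<le> length w' + H"
    using assms(3) by (auto simp: bounded_loss_def)
  show ?thesis unfolding eventually_eq_def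
  proof (intro exI allI impI)
    fix r w assume w: "w \<in> words d" "max Nb (Na + H) \<le> length w"
    show "pcomp f g r w = pcomp f1 g1 r w"
    proof (cases "g1 r w")
      case (Some p)
      then obtain r' w' where g1: "g1 r w = Some (r', w')" by (cases p) auto
      then have "w' \<in> words d \<and> length w \<le> length w' + H" using H w(1) by blast
      then have "f r' w' = f1 r' w'" using Na w by simp
      then show ?thesis using g1 Nb w by (simp add: pcomp_def)
    qed (use Nb w in \<open>simp add: pcomp_def\<close>)
  qed
qed

lemma pcomp_cong_left: "eventually_eq d f f1 \<Longrightarrow> bounded_loss d g \<Longrightarrow> eventually_eq d (pcomp f g) (pcomp f1 g)"
  using pcomp_cong eventually_eq_refl by blast

lemma pcomp_cong_right: "eventually_eq d g g1 \<Longrightarrow> bounded_loss d g1 \<Longrightarrow> eventually_eq d (pcomp f g) (pcomp f g1)"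
  using pcomp_cong eventually_eq_refl by blast

section \<open>The expansion equivalence\<close>

definition heads :: "triple \<Rightarrow> nat" where "heads t = length (fst t)"

definition feet :: "triple \<Rightarrow> nat" where "feet t = length (snd (snd t))"

lemma expand_heads_feet: "heads (expand d t k) = heads t" "feet (expand d t k) = feet t"
  by (auto simp: heads_def feet_def expand_def split: prod.splits)

lemma eventually_eq_tmap_expand:
  assumes "valid d G t" "G \<subseteq> aut d" "0 < d" "k < length (snd (fst (snd t)))" "self_similar d G"
  shows "eventually_eq d (tmap t) (tmap (expand d t k))"
proof -
  obtain Fm f Fp where t: "t = (Fm, f, Fp)" by (cases t) auto
  obtain Fm' f' Fp' where e: "expand d t k = (Fm', f', Fp')" by (cases "expand d t k") auto
  have Fp': "Fp' = attachF d k Fp" using e t by (simp add: expand_def split: prod.splits)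
  have ve: "valid d G (Fm', f', Fp')" using valid_expand[OF assms(1,4,3,2,5)] e by simp
  show ?thesis unfolding eventually_eq_def
  proof (intro exI allI impI)
    fix r w assume w: "w \<in> words d" "heightF Fp' \<le> length w"
    show "tmap t r w = tmap (expand d t k) r w"
    proof (cases "r < length Fp")
      case True
      then have "tmap (expand d t k) r w \<noteq> None" using tmap_total[OF ve w(1) _ w(2)] e Fp' by simp
      then show ?thesis using tmap_expand[OF assms(1,2,3,4) w(1)] by simp
    qed (use e t Fp' in \<open>simp add: tmap_None\<close>)
  qed
qed

lemma eqrel_refl: "(a, a) \<in> eqrel d G"
  unfolding eqrel_def by simp

lemma eqrel_sym: "(a, b) \<in> eqrel d G \<Longrightarrow> (b, a) \<in> eqrel d G"
proof -
  have "(expRel d G \<union> (expRel d G)\<inverse>)\<inverse> = expRel d G \<union> (expRel d G)\<inverse>" by auto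
  then show "(a, b) \<in> eqrel d G \<Longrightarrow> (b, a) \<in> eqrel d G"
    unfolding eqrel_def by (metis rtrancl_converseI converse_iff)
qed

lemma eqrel_trans: "(a, b) \<in> eqrel d G \<Longrightarrow> (b, c) \<in> eqrel d G \<Longrightarrow> (a, c) \<in> eqrel d G"
  unfolding eqrel_def by (rule rtrancl_trans)

lemma in_cls: "b \<in> cls d G a \<longleftrightarrow> (a, b) \<in> eqrel d G"
  by (simp add: cls_def)

lemma cls_eq: "(a, b) \<in> eqrel d G \<Longrightarrow> cls d G a = cls d G b"
  unfolding cls_def using eqrel_sym eqrel_trans by blast

lemma expand_eqrel: "valid d G t \<Longrightarrow> k < length (snd (fst (snd t))) \<Longrightarrow> (t, expand d t k) \<in> eqrel d G"
  unfolding eqrel_def expRel_def by (rule r_into_rtrancl) blast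

locale self_similar_group =
  fixes d :: nat and G :: "(nat list \<Rightarrow> nat list) set"
  assumes d_pos: "0 < d" and subgrp_G: "subgrp d G" and self_similar_G: "self_similar d G"
begin

lemma G_aut: "G \<subseteq> aut d"
  using subgrp_G by (simp add: subgrp_def)

lemma G_comp: "f \<in> G \<Longrightarrow> g \<in> G \<Longrightarrow> f \<circ> g \<in> G"
  using subgrp_G by (auto simp: subgrp_def)

lemma G_ainv: "f \<in> G \<Longrightarrow> ainv d f \<in> G"
  using subgrp_G by (auto simp: subgrp_def)

lemma G_id: "id \<in> G"
  using subgrp_G by (auto simp: subgrp_def)

lemma eqrel_invariants:
  assumes "(a, b) \<in> eqrel d G" "valid d G a"
  shows "valid d G b \<and> heads b = heads a \<and> feet b = feet a \<and> eventually_eq d (tmap a) (tmap b)"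
  using assms(1) unfolding eqrel_def
proof (induction rule: rtrancl_induct)
  case base
  then show ?case using assms(2) eventually_eq_refl by blast
next
  case (step b c)
  from step(2) show ?case
  proof
    assume "(b, c) \<in> expRel d G"
    then obtain k where bc: "c = expand d b k" "valid d G b" "k < length (snd (fst (snd b)))"
      by (auto simp: expRel_def)
    show ?thesis using step(3) bc valid_expand[OF bc(2,3) d_pos G_aut self_similar_G] expand_heads_feet
      eventually_eq_trans eventually_eq_tmap_expand[OF bc(2) G_aut d_pos bc(3) self_similar_G] by metis
  next
    assume "(b, c) \<in> (expRel d G)\<inverse>"
    then obtain k where bc: "b = expand d c k" "valid d G c" "k < length (snd (fst (snd c)))"
      by (auto simp: expRel_def)
    show ?thesis using step(3) bc expand_heads_feet
      eventually_eq_trans eventually_eq_sym eventually_eq_tmap_expand[OF bc(2) G_aut d_pos bc(3) self_similar_G] by metis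
  qed
qed

end

section \<open>A valid triple is determined by its map\<close>

lemma locateF_leaf_iff_child:
  "x < length ts \<Longrightarrow> (\<exists>i. locateF ts x u = Some (i, [])) \<longleftrightarrow> (\<exists>i. locate (ts ! x) u = Some (i, []))"
  using locateF_nth[of x ts u] by (cases "locate (ts ! x) u") auto

lemma full_tree_eq_if_same_leaves:
  "full d t \<Longrightarrow> full d t' \<Longrightarrow> (\<forall>u. (\<exists>i. locate t u = Some (i, [])) \<longleftrightarrow> (\<exists>i. locate t' u = Some (i, []))) \<Longrightarrow> t = t'"
proof (induction t arbitrary: t')
  case Lf
  have "\<exists>i. locate t' [] = Some (i, [])" using Lf(3) by auto
  then show ?case by (cases t') auto
next
  case (Nd ts)
  show ?case
  proof (cases t')
    case Lf
    then show ?thesis using Nd(4) by (metis locate.simps(1,2) option.distinct(1))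
  next
    case (Nd ts')
    have l: "length ts = d" "length ts' = d" using Nd.prems(1,2) \<open>t' = Nd ts'\<close> by auto
    have "ts = ts'"
    proof (rule nth_equalityI)
      show "length ts = length ts'" using l by simp
    next
      fix x assume x: "x < length ts"
      have "\<forall>u. (\<exists>i. locate (ts ! x) u = Some (i, [])) \<longleftrightarrow> (\<exists>i. locate (ts' ! x) u = Some (i, []))"
      proof
        fix u
        have "(\<exists>i. locate (Nd ts) (x # u) = Some (i, [])) \<longleftrightarrow> (\<exists>i. locate (Nd ts') (x # u) = Some (i, []))"
          using Nd.prems(3) \<open>t' = Nd ts'\<close> by blast
        then show "(\<exists>i. locate (ts ! x) u = Some (i, [])) \<longleftrightarrow> (\<exists>i. locate (ts' ! x) u = Some (i, []))"
          using locateF_leaf_iff_child[of x ts u] locateF_leaf_iff_child[of x ts' u] x l by simp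
      qed
      moreover have "full d (ts ! x)" "full d (ts' ! x)" using Nd.prems \<open>t' = Nd ts'\<close> x l by auto
      ultimately show "ts ! x = ts' ! x" using Nd.IH x by simp
    qed
    then show ?thesis using \<open>t' = Nd ts'\<close> by simp
  qed
qed

lemma forest_eq_if_same_leaves:
  assumes "forest d F" "forest d F'" "length F = length F'"
    "\<forall>r u. (\<exists>i. locateF F r u = Some (i, [])) \<longleftrightarrow> (\<exists>i. locateF F' r u = Some (i, []))"
  shows "F = F'"
proof (rule nth_equalityI)
  show "length F = length F'" by fact
next
  fix r assume r: "r < length F"
  show "F ! r = F' ! r"
  proof (rule full_tree_eq_if_same_leaves)
    show "full d (F ! r)" "full d (F' ! r)" using assms r by (auto simp: forest_def)
    show "\<forall>u. (\<exists>i. locate (F ! r) u = Some (i, [])) \<longleftrightarrow> (\<exists>i. locate (F' ! r) u = Some (i, []))"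
      using assms(4) locateF_leaf_iff_child[of r F] locateF_leaf_iff_child[of r F'] r assms(3) by simp
  qed
qed

lemma locateF_leaf_iff_leaf_addr: "(\<exists>i. locateF F r u = Some (i, [])) \<longleftrightarrow> (r, u) \<in> leaf_addr F ` {0..<fleaves F}"
proof
  assume "\<exists>i. locateF F r u = Some (i, [])"
  then obtain i where "locateF F r u = Some (i, [])" by blast
  then have "i < fleaves F \<and> (\<exists>u'. leaf_addr F i = (r, u') \<and> u = u' @ [])" by (rule locate_Some(2))
  then show "(r, u) \<in> leaf_addr F ` {0..<fleaves F}" by force
next
  assume "(r, u) \<in> leaf_addr F ` {0..<fleaves F}"
  then obtain i where "i < fleaves F" "leaf_addr F i = (r, u)" by auto
  then show "\<exists>i. locateF F r u = Some (i, [])" using locateF_leaf_addr by blast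
qed

lemma aut_eq_if_eq_on_long_words:
  assumes "f \<in> aut d" "g \<in> aut d" "0 < d"
    and eq: "\<And>v. v \<in> words d \<Longrightarrow> N \<le> length v \<Longrightarrow> f v = g v"
  shows "f = g"
proof
  fix w
  show "f w = g w"
  proof (cases "w \<in> words d")
    case True
    define z where "z = replicate N (0::nat)"
    have z: "z \<in> words d" using assms(3) by (simp add: z_def words_iff set_replicate_conv_if)
    have "f (w @ z) = g (w @ z)" using eq True z by (simp add: z_def words_iff)
    then show ?thesis using aut_take_prefix[OF assms(1) True z] aut_take_prefix[OF assms(2) True z] by simp
  qed (metis aut_outside assms(1,2))
qed

context self_similar_group
begin

(* A word through leaf j of the common feet forest is sent to the addresses of leaves \<sigma> j and
   \<sigma>' j followed by words of the same length, so both parts agree. *)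

lemma leaf_data_eq_if_tmap_eq:
  assumes v1: "valid d G (Fm, (\<sigma>, fs), Fp)" and v2: "valid d G (Fm', (\<sigma>', fs'), Fp)"
    and eq: "\<And>r w. w \<in> words d \<Longrightarrow> N \<le> length w \<Longrightarrow> tmap (Fm, (\<sigma>, fs), Fp) r w = tmap (Fm', (\<sigma>', fs'), Fp) r w"
    and j: "j < length fs" and v: "v \<in> words d" "N \<le> length v"
  shows "leaf_addr Fm (\<sigma> j) = leaf_addr Fm' (\<sigma>' j) \<and> (fs ! j) v = (fs' ! j) v"
proof -
  have a: "forest d Fp" "fleaves Fp = length fs" "set fs \<subseteq> G" and b: "length fs' = length fs" "set fs' \<subseteq> G"
    using v1 v2 by (auto simp: valid_iff)
  obtain r u where ru: "leaf_addr Fp j = (r, u)" by (cases "leaf_addr Fp j")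
  have "u \<in> words d" using leaf_addr_words[OF a(1), of j] ru j a(2) by simp
  then have "tmap (Fm, (\<sigma>, fs), Fp) r (u @ v) = tmap (Fm', (\<sigma>', fs'), Fp) r (u @ v)"
    using eq v by (simp add: words_iff)
  moreover have "locateF Fp r (u @ v) = Some (j, v)" using locate_leaf_path(2)[OF _ ru] j a(2) by simp
  ultimately have e: "apsnd (\<lambda>u. u @ (fs ! j) v) (leaf_addr Fm (\<sigma> j))
      = apsnd (\<lambda>u. u @ (fs' ! j) v) (leaf_addr Fm' (\<sigma>' j))"
    by (simp add: tmap_def)
  have "fs ! j \<in> aut d" "fs' ! j \<in> aut d" using a(3) b j G_aut nth_mem by (metis subsetD)+
  then have "length ((fs ! j) v) = length ((fs' ! j) v)" using aut_length v(1) by metis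
  then show ?thesis using e by (cases "leaf_addr Fm (\<sigma> j)", cases "leaf_addr Fm' (\<sigma>' j)") auto
qed

lemma triple_eq_if_tmap_eq:
  assumes v1: "valid d G (Fm, (\<sigma>, fs), Fp)" and v2: "valid d G (Fm', (\<sigma>', fs'), Fp)"
    and len: "length Fm = length Fm'"
    and eq: "\<And>r w. w \<in> words d \<Longrightarrow> N \<le> length w \<Longrightarrow> tmap (Fm, (\<sigma>, fs), Fp) r w = tmap (Fm', (\<sigma>', fs'), Fp) r w"
  shows "(Fm, (\<sigma>, fs), Fp) = (Fm', (\<sigma>', fs'), Fp)"
proof -
  define n where "n = length fs"
  have a: "forest d Fm" "fleaves Fm = n" "\<sigma> permutes {0..<n}" "set fs \<subseteq> G"
    and b: "forest d Fm'" "fleaves Fm' = n" "\<sigma>' permutes {0..<n}" "set fs' \<subseteq> G" "length fs' = n"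
    using v1 v2 by (auto simp: valid_iff n_def)
  have data: "\<And>j v. j < n \<Longrightarrow> v \<in> words d \<Longrightarrow> N \<le> length v
      \<Longrightarrow> leaf_addr Fm (\<sigma> j) = leaf_addr Fm' (\<sigma>' j) \<and> (fs ! j) v = (fs' ! j) v"
    using leaf_data_eq_if_tmap_eq[OF v1 v2] eq n_def by blast
  have addr: "\<And>j. j < n \<Longrightarrow> leaf_addr Fm (\<sigma> j) = leaf_addr Fm' (\<sigma>' j)"
    using data[where v="replicate N 0"] d_pos by (simp add: words_iff set_replicate_conv_if)
  have "fs ! j = fs' ! j" if "j < n" for j
    using aut_eq_if_eq_on_long_words[OF _ _ d_pos, of "fs ! j" "fs' ! j" N] data[OF that]
      a(4) b(4,5) that G_aut n_def nth_mem by (metis subsetD)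
  then have fs: "fs = fs'" using b(5) n_def by (simp add: nth_equalityI)
  have "leaf_addr Fm ` {0..<n} = leaf_addr Fm' ` {0..<n}"
  proof -
    have "leaf_addr Fm ` {0..<n} = (\<lambda>j. leaf_addr Fm (\<sigma> j)) ` {0..<n}"
      using permutes_image[OF a(3)] by (metis image_image)
    also have "\<dots> = (\<lambda>j. leaf_addr Fm' (\<sigma>' j)) ` {0..<n}" using addr by auto
    also have "\<dots> = leaf_addr Fm' ` {0..<n}" using permutes_image[OF b(3)] by (metis image_image)
    finally show ?thesis .
  qed
  then have Fm: "Fm = Fm'"
    using forest_eq_if_same_leaves[OF a(1) b(1) len] a(2) b(2) by (simp add: locateF_leaf_iff_leaf_addr)
  have "\<sigma> j = \<sigma>' j" for j
  proof (cases "j < n")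
    case True
    then show ?thesis using addr[OF True] Fm leaf_addr_inj[of "\<sigma> j" Fm "\<sigma>' j"] a(2)
      permutes_in_image[OF a(3)] permutes_in_image[OF b(3)] by simp
  qed (use permutes_not_in[OF a(3)] permutes_not_in[OF b(3)] in simp)
  then show ?thesis using Fm fs by auto
qed

end

section \<open>Common refinements\<close>

definition caret_step :: "nat \<Rightarrow> (tree list \<times> tree list) set" where
  "caret_step d = {(F, attachF d k F) | F k. k < fleaves F}"

definition refinement :: "nat \<Rightarrow> (tree list \<times> tree list) set" where
  "refinement d = (caret_step d)\<^sup>*"

lemma attachF_append1: "k < fleaves F \<Longrightarrow> attachF d k (F @ G) = attachF d k F @ G"
  by (induction F arbitrary: k) auto

lemma attachF_append2: "attachF d (fleaves F + k) (F @ G) = F @ attachF d k G"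
  by (induction F arbitrary: k) auto

lemma refinement_append_right: "(F, E) \<in> refinement d \<Longrightarrow> (F @ G, E @ G) \<in> refinement d"
  unfolding refinement_def
proof (induction rule: rtrancl_induct)
  case base then show ?case by simp
next
  case (step E1 E2)
  then obtain k where "E2 = attachF d k E1" "k < fleaves E1" by (auto simp: caret_step_def)
  then have "(E1 @ G, E2 @ G) \<in> caret_step d" unfolding caret_step_def
    by (auto simp: attachF_append1 intro!: exI[of _ "E1 @ G"] exI[of _ k])
  then show ?case using step(3) by simp
qed

lemma refinement_append_left: "(F, E) \<in> refinement d \<Longrightarrow> (G @ F, G @ E) \<in> refinement d"
  unfolding refinement_def
proof (induction rule: rtrancl_induct)
  case base then show ?case by simp
next
  case (step E1 E2)
  then obtain k where "E2 = attachF d k E1" "k < fleaves E1" by (auto simp: caret_step_def)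
  then have "(G @ E1, G @ E2) \<in> caret_step d" unfolding caret_step_def
    using attachF_append2[where F=G and G=E1 and k=k and d=d] by (auto intro!: exI[of _ "G @ E1"] exI[of _ "fleaves G + k"])
  then show ?case using step(3) by simp
qed

lemma refinement_Nd: "(ts, ts') \<in> refinement d \<Longrightarrow> ([Nd ts], [Nd ts']) \<in> refinement d"
  unfolding refinement_def
proof (induction rule: rtrancl_induct)
  case base then show ?case by simp
next
  case (step E1 E2)
  then obtain k where "E2 = attachF d k E1" "k < fleaves E1" by (auto simp: caret_step_def)
  then have "([Nd E1], [Nd E2]) \<in> caret_step d" unfolding caret_step_def
    by (auto simp: nleaves_Nd intro!: exI[of _ "[Nd E1]"] exI[of _ k])
  then show ?case using step(3) by simp
qed

lemma refinement_caret: "([Lf], [Nd (replicate d Lf)]) \<in> refinement d"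
  unfolding refinement_def caret_step_def by (rule r_into_rtrancl) (auto intro!: exI[of _ "[Lf]"] exI[of _ 0])

lemma refinement_trans: "(a, b) \<in> refinement d \<Longrightarrow> (b, c) \<in> refinement d \<Longrightarrow> (a, c) \<in> refinement d"
  unfolding refinement_def by (rule rtrancl_trans)

lemma refinement_refl: "(a, a) \<in> refinement d"
  unfolding refinement_def by simp

lemma refinement_pointwise:
  "length ts = length es \<Longrightarrow> (\<forall>i<length ts. ([ts ! i], [es ! i]) \<in> refinement d) \<Longrightarrow> (ts, es) \<in> refinement d"
proof (induction ts arbitrary: es)
  case Nil then show ?case by (simp add: refinement_refl)
next
  case (Cons t ts)
  then obtain e es' where es: "es = e # es'" by (cases es) auto
  have 1: "([t], [e]) \<in> refinement d" using Cons.prems es by force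
  have 2: "(ts, es') \<in> refinement d" using Cons es by force
  have "([t] @ ts, [e] @ ts) \<in> refinement d" using refinement_append_right[OF 1] .
  moreover have "([e] @ ts, [e] @ es') \<in> refinement d" using refinement_append_left[OF 2] .
  ultimately have "([t] @ ts, [e] @ es') \<in> refinement d" by (rule refinement_trans)
  then show ?case using es by simp
qed

lemma refinement_from_Lf: "full d t \<Longrightarrow> ([Lf], [t]) \<in> refinement d"
proof (induction t)
  case Lf then show ?case by (simp add: refinement_refl)
next
  case (Nd ts)
  have l: "length ts = d" using Nd.prems by simp
  have "(replicate d Lf, ts) \<in> refinement d"
  proof (rule refinement_pointwise)
    show "length (replicate d Lf) = length ts" using l by simp
    show "\<forall>i<length (replicate d Lf). ([replicate d Lf ! i], [ts ! i]) \<in> refinement d"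
    proof (intro allI impI)
      fix i assume i: "i < length (replicate d Lf)"
      then have "ts ! i \<in> set ts" "full d (ts ! i)" using l Nd.prems by auto
      then show "([replicate d Lf ! i], [ts ! i]) \<in> refinement d" using Nd.IH i by simp
    qed
  qed
  then have "([Nd (replicate d Lf)], [Nd ts]) \<in> refinement d" by (rule refinement_Nd)
  then show ?case using refinement_caret refinement_trans by metis
qed

lemma common_refinement_pointwise:
  assumes "length ts = length ts'"
    and "\<And>i. i < length ts \<Longrightarrow> \<exists>e. full d e \<and> ([ts ! i], [e]) \<in> refinement d \<and> ([ts' ! i], [e]) \<in> refinement d"
  shows "\<exists>es. forest d es \<and> length es = length ts \<and> (ts, es) \<in> refinement d \<and> (ts', es) \<in> refinement d"
proof -
  from assms(2) have "\<forall>i. \<exists>e. i < length ts \<longrightarrow>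
      full d e \<and> ([ts ! i], [e]) \<in> refinement d \<and> ([ts' ! i], [e]) \<in> refinement d" by blast
  then obtain ef where ef: "\<forall>i. i < length ts \<longrightarrow>
      full d (ef i) \<and> ([ts ! i], [ef i]) \<in> refinement d \<and> ([ts' ! i], [ef i]) \<in> refinement d"
    by (rule choice[THEN exE]) blast
  define es where "es = map ef [0..<length ts]"
  have len: "length es = length ts" by (simp add: es_def)
  have "(ts, es) \<in> refinement d" by (rule refinement_pointwise) (simp_all add: len ef es_def)
  moreover have "(ts', es) \<in> refinement d"
    by (rule refinement_pointwise) (simp_all add: len ef es_def assms(1)[symmetric])
  moreover have "forest d es" using ef by (auto simp: forest_def es_def)
  ultimately show ?thesis using len by blast
qed

lemma common_tree_refinement:
  "full d t \<Longrightarrow> full d t' \<Longrightarrow> \<exists>e. full d e \<and> ([t], [e]) \<in> refinement d \<and> ([t'], [e]) \<in> refinement d"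
proof (induction t arbitrary: t')
  case Lf
  then show ?case using refinement_from_Lf refinement_refl by blast
next
  case (Nd ts)
  show ?case
  proof (cases t')
    case Lf
    then show ?thesis using Nd.prems refinement_from_Lf[of d "Nd ts"] refinement_refl by blast
  next
    case (Nd ts')
    then have l: "length ts = d" "length ts' = d" and f: "\<forall>s\<in>set ts. full d s" "\<forall>s\<in>set ts'. full d s"
      using Nd.prems by auto
    have "\<exists>e. full d e \<and> ([ts ! i], [e]) \<in> refinement d \<and> ([ts' ! i], [e]) \<in> refinement d"
      if "i < length ts" for i
      using Nd.IH[OF nth_mem[OF that]] f l that by (simp add: nth_mem)
    then obtain es where "forest d es" "length es = d" "(ts, es) \<in> refinement d" "(ts', es) \<in> refinement d"
      using common_refinement_pointwise[of ts ts' d] l by auto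
    then show ?thesis using \<open>t' = Nd ts'\<close> refinement_Nd by (auto simp: forest_def intro!: exI[of _ "Nd es"])
  qed
qed

lemma common_refinement:
  assumes "forest d F" "forest d F'" "length F = length F'"
  shows "\<exists>E. forest d E \<and> (F, E) \<in> refinement d \<and> (F', E) \<in> refinement d"
proof -
  have "\<exists>e. full d e \<and> ([F ! i], [e]) \<in> refinement d \<and> ([F' ! i], [e]) \<in> refinement d"
    if "i < length F" for i
    using common_tree_refinement assms that by (simp add: forest_def nth_mem)
  then show ?thesis using common_refinement_pointwise[OF assms(3)] by blast
qed

context self_similar_group
begin

lemma expand_feet_to:
  assumes "(snd (snd t), E) \<in> refinement d" "valid d G t"
  shows "\<exists>t1. (t, t1) \<in> eqrel d G \<and> snd (snd t1) = E"
  using assms(1) unfolding refinement_def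
proof (induction rule: rtrancl_induct)
  case base then show ?case using eqrel_refl by blast
next
  case (step E1 E2)
  then obtain t1 where t1: "(t, t1) \<in> eqrel d G" "snd (snd t1) = E1" by blast
  obtain k where k: "E2 = attachF d k E1" "k < fleaves E1" using step(2) by (auto simp: caret_step_def)
  have v1: "valid d G t1" using eqrel_invariants[OF t1(1) assms(2)] by blast
  obtain Fm \<sigma> fs where tt: "t1 = (Fm, (\<sigma>, fs), E1)" using t1(2) by (cases t1) auto
  have kn: "k < length fs" using v1 k tt by (simp add: valid_iff)
  have "(t1, expand d t1 k) \<in> eqrel d G" using expand_eqrel[OF v1] kn tt by simp
  moreover have "snd (snd (expand d t1 k)) = E2" using tt k by (simp add: expand_def)
  ultimately show ?case using t1(1) eqrel_trans by blast
qed

lemma expand_heads_to: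
  assumes "(fst t, E) \<in> refinement d" "valid d G t"
  shows "\<exists>t1. (t, t1) \<in> eqrel d G \<and> fst t1 = E"
  using assms(1) unfolding refinement_def
proof (induction rule: rtrancl_induct)
  case base then show ?case using eqrel_refl by blast
next
  case (step E1 E2)
  then obtain t1 where t1: "(t, t1) \<in> eqrel d G" "fst t1 = E1" by blast
  obtain k where k: "E2 = attachF d k E1" "k < fleaves E1" using step(2) by (auto simp: caret_step_def)
  have v1: "valid d G t1" using eqrel_invariants[OF t1(1) assms(2)] by blast
  obtain \<sigma> fs Fp where tt: "t1 = (E1, (\<sigma>, fs), Fp)" using t1(2) by (cases t1) auto
  have kn: "k < length fs" "\<sigma> permutes {0..<length fs}" using v1 k tt by (auto simp: valid_iff)
  have "k \<in> \<sigma> ` {0..<length fs}" using permutes_image[OF kn(2)] kn(1) by simp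
  then obtain j where j: "j < length fs" "\<sigma> j = k" by auto
  have "(t1, expand d t1 j) \<in> eqrel d G" using expand_eqrel[OF v1] j tt by simp
  moreover have "fst (expand d t1 j) = E2" using tt k j by (simp add: expand_def)
  ultimately show ?case using t1(1) eqrel_trans by blast
qed


(* Expand both triples to a common feet forest; there a valid triple is determined by its map. *)

lemma eqrel_if_eventually_eq:
  assumes va: "valid d G a" and vb: "valid d G b" and "heads a = heads b" "feet a = feet b"
    and "eventually_eq d (tmap a) (tmap b)"
  shows "(a, b) \<in> eqrel d G"
proof -
  have "forest d (snd (snd a))" "forest d (snd (snd b))"
    using va vb by (cases a, cases b, auto simp: valid_def)+
  then obtain E where E: "(snd (snd a), E) \<in> refinement d" "(snd (snd b), E) \<in> refinement d"
    using common_refinement[of d "snd (snd a)" "snd (snd b)"] assms(4) by (auto simp: feet_def)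
  obtain a1 where a1: "(a, a1) \<in> eqrel d G" "snd (snd a1) = E" using expand_feet_to[OF E(1) va] by blast
  obtain b1 where b1: "(b, b1) \<in> eqrel d G" "snd (snd b1) = E" using expand_feet_to[OF E(2) vb] by blast
  note ia = eqrel_invariants[OF a1(1) va] and ib = eqrel_invariants[OF b1(1) vb]
  obtain Fm \<sigma> fs Fm' \<sigma>' fs' where a1e: "a1 = (Fm, (\<sigma>, fs), E)" and b1e: "b1 = (Fm', (\<sigma>', fs'), E)"
    using a1(2) b1(2) by (cases a1, cases b1) auto
  have "eventually_eq d (tmap a1) (tmap b1)" using ia ib assms(5) eventually_eq_trans eventually_eq_sym by metis
  then obtain N where "\<forall>r w. w \<in> words d \<longrightarrow> N \<le> length w \<longrightarrow> tmap a1 r w = tmap b1 r w"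
    by (auto simp: eventually_eq_def)
  moreover have "length Fm = length Fm'" using ia ib assms(3) a1e b1e by (simp add: heads_def)
  ultimately have "a1 = b1" using triple_eq_if_tmap_eq[of Fm \<sigma> fs E Fm' \<sigma>' fs' N] ia ib a1e b1e by simp
  then show ?thesis using a1(1) b1(1) eqrel_sym eqrel_trans by metis
qed

end

section \<open>Products and inverses of classes\<close>

definition tmult :: "triple \<Rightarrow> triple \<Rightarrow> triple" where
  "tmult a b = (fst a, wmult (fst (snd a)) (fst (snd b)), snd (snd b))"

definition tinv :: "nat \<Rightarrow> triple \<Rightarrow> triple" where
  "tinv d a = (snd (snd a), winv d (fst (snd a)), fst a)"

lemma tmult_heads_feet: "heads (tmult a b) = heads a" "feet (tmult a b) = feet b"
  by (simp_all add: tmult_def heads_def feet_def)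

lemma tinv_heads_feet: "heads (tinv d t) = feet t" "feet (tinv d t) = heads t"
  by (simp_all add: heads_def feet_def tinv_def)

lemma tmap_tmult:
  assumes "valid d G (F, f, E)" "valid d G (E, g, D)"
  shows "tmap (tmult (F, f, E) (E, g, D)) = pcomp (tmap (F, f, E)) (tmap (E, g, D))"
proof (intro ext)
  fix r w
  obtain \<sigma> fs where f: "f = (\<sigma>, fs)" by (cases f)
  obtain \<tau> gs where g: "g = (\<tau>, gs)" by (cases g)
  have vb: "fleaves D = length gs" "fleaves E = length gs" "\<tau> permutes {0..<length gs}"
    using assms(2) g by (auto simp: valid_iff)
  show "tmap (tmult (F, f, E) (E, g, D)) r w = pcomp (tmap (F, f, E)) (tmap (E, g, D)) r w"
  proof (cases "locateF D r w")
    case (Some jv)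
    then obtain j v where jv: "locateF D r w = Some (j, v)" by (cases jv) auto
    have j: "j < length gs" using locate_Some(2)[OF jv] vb(1) by simp
    obtain r1 u1 where ru: "leaf_addr E (\<tau> j) = (r1, u1)" by (cases "leaf_addr E (\<tau> j)")
    have "locateF E r1 (u1 @ (gs ! j) v) = Some (\<tau> j, (gs ! j) v)"
      using locate_leaf_path(2)[OF _ ru] permutes_in_image[OF vb(3)] j vb(2) by simp
    then show ?thesis using jv ru j by (simp add: tmult_def pcomp_def tmap_def f g wmult_def)
  qed (simp add: tmult_def pcomp_def tmap_def f g wmult_def)
qed

context self_similar_group
begin

lemma valid_tmult:
  assumes "valid d G (F, f, E)" "valid d G (E, g, D)"
  shows "valid d G (tmult (F, f, E) (E, g, D))"
proof -
  obtain \<sigma> fs \<tau> gs where f: "f = (\<sigma>, fs)" and g: "g = (\<tau>, gs)" by (cases f, cases g)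
  have l: "length fs = length gs" using assms f g by (simp add: valid_iff)
  have "wmult f g \<in> wr (length gs) G"
    using wmult_wr[of G G \<sigma> fs "length gs" \<tau> gs] G_comp assms f g l by (simp add: valid_iff wr_def)
  moreover have "length (snd (wmult f g)) = length gs" by (simp add: f g wmult_def)
  ultimately show ?thesis using assms f g l by (auto simp: valid_def tmult_def)
qed

lemma bounded_loss_tmap: "valid d G t \<Longrightarrow> bounded_loss d (tmap t)"
  unfolding bounded_loss_def using tmap_out[OF _ G_aut] by blast

lemma gmult_cls_cls:
  assumes va: "valid d G (F, f, E)" and vb: "valid d G (E, g, D)"
  shows "gmult d G (cls d G (F, f, E)) (cls d G (E, g, D)) = cls d G (tmult (F, f, E) (E, g, D))"
proof
  show "cls d G (tmult (F, f, E) (E, g, D)) \<subseteq> gmult d G (cls d G (F, f, E)) (cls d G (E, g, D))"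
    unfolding gmult_def tmult_def using eqrel_refl by (fastforce simp: in_cls)
next
  show "gmult d G (cls d G (F, f, E)) (cls d G (E, g, D)) \<subseteq> cls d G (tmult (F, f, E) (E, g, D))"
  proof
    fix t assume "t \<in> gmult d G (cls d G (F, f, E)) (cls d G (E, g, D))"
    then obtain F1 f1 E1 g1 D1 where w: "((F, f, E), (F1, f1, E1)) \<in> eqrel d G"
      "((E, g, D), (E1, g1, D1)) \<in> eqrel d G" "((F1, wmult f1 g1, D1), t) \<in> eqrel d G"
      unfolding gmult_def by (auto simp: in_cls)
    note i1 = eqrel_invariants[OF w(1) va] and i2 = eqrel_invariants[OF w(2) vb]
    have "eventually_eq d (pcomp (tmap (F, f, E)) (tmap (E, g, D))) (pcomp (tmap (F1, f1, E1)) (tmap (E1, g1, D1)))"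
      using pcomp_cong i1 i2 bounded_loss_tmap by blast
    then have "eventually_eq d (tmap (tmult (F, f, E) (E, g, D))) (tmap (tmult (F1, f1, E1) (E1, g1, D1)))"
      using tmap_tmult va vb i1 i2 by metis
    then have "(tmult (F, f, E) (E, g, D), tmult (F1, f1, E1) (E1, g1, D1)) \<in> eqrel d G"
      using eqrel_if_eventually_eq valid_tmult va vb i1 i2 tmult_heads_feet by metis
    then show "t \<in> cls d G (tmult (F, f, E) (E, g, D))"
      using w(3) eqrel_trans by (simp add: tmult_def in_cls)
  qed
qed

lemma gmult_cls:
  assumes va: "valid d G a" and vb: "valid d G b" and fh: "feet a = heads b"
  shows "\<exists>p. valid d G p \<and> gmult d G (cls d G a) (cls d G b) = cls d G p \<and> heads p = heads a
     \<and> feet p = feet b \<and> eventually_eq d (tmap p) (pcomp (tmap a) (tmap b))"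
proof -
  have "forest d (snd (snd a))" "forest d (fst b)"
    using va vb by (cases a, cases b, auto simp: valid_def)+
  then obtain E where E: "(snd (snd a), E) \<in> refinement d" "(fst b, E) \<in> refinement d"
    using common_refinement fh by (metis feet_def heads_def)
  obtain a1 where a1: "(a, a1) \<in> eqrel d G" "snd (snd a1) = E" using expand_feet_to[OF E(1) va] by blast
  obtain b1 where b1: "(b, b1) \<in> eqrel d G" "fst b1 = E" using expand_heads_to[OF E(2) vb] by blast
  note ia = eqrel_invariants[OF a1(1) va] and ib = eqrel_invariants[OF b1(1) vb]
  obtain F f g D where a1e: "a1 = (F, f, E)" and b1e: "b1 = (E, g, D)"
    using a1(2) b1(2) by (cases a1, cases b1) auto
  have "gmult d G (cls d G a) (cls d G b) = cls d G (tmult a1 b1)"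
    using cls_eq a1(1) b1(1) gmult_cls_cls ia ib a1e b1e by simp
  moreover have "eventually_eq d (pcomp (tmap a1) (tmap b1)) (pcomp (tmap a) (tmap b))"
    using pcomp_cong ia ib eventually_eq_sym bounded_loss_tmap[OF vb] by blast
  then have "eventually_eq d (tmap (tmult a1 b1)) (pcomp (tmap a) (tmap b))"
    using tmap_tmult ia ib a1e b1e by metis
  moreover have "valid d G (tmult a1 b1)" using valid_tmult ia ib a1e b1e by simp
  ultimately show ?thesis using ia ib tmult_heads_feet by metis
qed

lemma eventually_eq_if_cls_eq:
  assumes "valid d G a" "valid d G b" "cls d G a = cls d G b"
  shows "eventually_eq d (tmap a) (tmap b) \<and> heads a = heads b \<and> feet a = feet b"
proof -
  have "(a, b) \<in> eqrel d G" using assms(3) eqrel_refl in_cls by metis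
  then show ?thesis using eqrel_invariants[OF _ assms(1)] by metis
qed

lemma gmult_cls_eqI:
  assumes "valid d G a" "valid d G b" "feet a = heads b" "valid d G p" "heads p = heads a"
    "feet p = feet b" "eventually_eq d (tmap p) (pcomp (tmap a) (tmap b))"
  shows "gmult d G (cls d G a) (cls d G b) = cls d G p"
proof -
  obtain p' where p': "valid d G p'" "gmult d G (cls d G a) (cls d G b) = cls d G p'"
    "heads p' = heads a" "feet p' = feet b" "eventually_eq d (tmap p') (pcomp (tmap a) (tmap b))"
    using gmult_cls[OF assms(1-3)] by blast
  have "(p', p) \<in> eqrel d G"
    using eqrel_if_eventually_eq[OF p'(1) assms(4)] p' assms(5-7) eventually_eq_trans eventually_eq_sym by metis
  then show ?thesis using p'(2) cls_eq by simp
qed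

lemma gmult_assoc:
  assumes "valid d G a" "valid d G b" "valid d G c" "feet a = heads b" "feet b = heads c"
  shows "gmult d G (cls d G a) (gmult d G (cls d G b) (cls d G c))
    = gmult d G (gmult d G (cls d G a) (cls d G b)) (cls d G c)"
proof -
  obtain p where p: "valid d G p" "gmult d G (cls d G b) (cls d G c) = cls d G p" "heads p = heads b"
    "feet p = feet c" "eventually_eq d (tmap p) (pcomp (tmap b) (tmap c))"
    using gmult_cls[OF assms(2,3,5)] by blast
  obtain q where q: "valid d G q" "gmult d G (cls d G a) (cls d G b) = cls d G q" "heads q = heads a"
    "feet q = feet b" "eventually_eq d (tmap q) (pcomp (tmap a) (tmap b))"
    using gmult_cls[OF assms(1,2,4)] by blast
  obtain s where s: "valid d G s" "gmult d G (cls d G a) (cls d G p) = cls d G s" "heads s = heads a"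
    "feet s = feet p" "eventually_eq d (tmap s) (pcomp (tmap a) (tmap p))"
    using gmult_cls[OF assms(1) p(1)] assms(4) p(3) by metis
  have "eventually_eq d (pcomp (tmap a) (tmap p)) (pcomp (tmap a) (pcomp (tmap b) (tmap c)))"
    using pcomp_cong_right[OF p(5)] bounded_loss_pcomp bounded_loss_tmap assms(2,3) by blast
  moreover have "eventually_eq d (pcomp (tmap q) (tmap c)) (pcomp (pcomp (tmap a) (tmap b)) (tmap c))"
    using pcomp_cong_left[OF q(5)] bounded_loss_tmap assms(3) by blast
  ultimately have "eventually_eq d (tmap s) (pcomp (tmap q) (tmap c))"
    using s(5) pcomp_assoc eventually_eq_trans eventually_eq_sym by metis
  then have "gmult d G (cls d G q) (cls d G c) = cls d G s"
    using gmult_cls_eqI[OF q(1) assms(3) _ s(1)] q s p assms(5) by simp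
  then show ?thesis using p(2) q(2) s(2) by simp
qed

end

definition tid :: "nat \<Rightarrow> triple" where
  "tid n = (triv n, (id, replicate n id), triv n)"

lemma tmap_tid: "tmap (tid n) r w = (if r < n then Some (r, w) else None)"
  by (simp add: tmap_def tid_def triv_def locateF_triv leaf_addr_triv)

context self_similar_group
begin

lemma valid_tid: "valid d G (tid n)"
  using G_id by (auto simp: valid_def tid_def triv_def forest_def wr_def fleaves_replicate permutes_id)

lemma valid_tinv: "valid d G t \<Longrightarrow> valid d G (tinv d t)"
proof -
  assume v: "valid d G t"
  obtain Fm \<sigma> fs Fp where t: "t = (Fm, (\<sigma>, fs), Fp)" by (cases t) auto
  have "(\<sigma>, fs) \<in> wr (length fs) G" using v t by (simp add: valid_def)
  then have w: "winv d (\<sigma>, fs) \<in> wr (length fs) G" using winv_wr G_ainv by blast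
  have l: "length (snd (winv d (\<sigma>, fs))) = length fs" by (simp add: winv_def)
  show ?thesis using v w l t by (simp add: valid_def tinv_def)
qed

lemma tmap_tinv:
  assumes v: "valid d G t" and w: "w \<in> words d" and s: "tmap (tinv d t) r w = Some (r', w')"
  shows "tmap t r' w' = Some (r, w)"
proof -
  obtain Fm \<sigma> fs Fp where t: "t = (Fm, (\<sigma>, fs), Fp)" by (cases t) auto
  have a: "forest d Fm" "forest d Fp" "fleaves Fm = length fs" "fleaves Fp = length fs"
     "\<sigma> permutes {0..<length fs}" "set fs \<subseteq> G" using v by (auto simp: t valid_iff)
  obtain i v' where iv: "locateF Fm r w = Some (i, v')" using s
    by (cases "locateF Fm r w") (auto simp: tmap_def tinv_def t winv_def)
  obtain u where iu: "i < length fs" "leaf_addr Fm i = (r, u)" "w = u @ v'" using locate_Some(2)[OF iv] a(3) by auto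
  define j where "j = inv \<sigma> i"
  have j: "j < length fs" "\<sigma> j = i" using permutes_in_image[OF permutes_inv[OF a(5)]] iu
    permutes_inverses(1)[OF a(5)] by (auto simp: j_def)
  have fj: "fs ! j \<in> aut d" using subsetD[OF subset_trans[OF a(6) G_aut] nth_mem[OF j(1)]] .
  have v'w: "v' \<in> words d" using locateF_suffix[OF iv] w by (auto simp: words_iff)
  obtain r1 u1 where ru: "leaf_addr Fp j = (r1, u1)" by (cases "leaf_addr Fp j")
  have out: "(r', w') = (r1, u1 @ ainv d (fs ! j) v')"
    using s iu(1) iv ru unfolding j_def by (simp add: tmap_def tinv_def t winv_def)
  have lo: "locateF Fp r1 (u1 @ ainv d (fs ! j) v') = Some (j, ainv d (fs ! j) v')"
    using locate_leaf_path(2)[OF _ ru] j a(4) by simp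
  show ?thesis using out lo j iu aut_ainv[OF fj v'w] by (simp add: tmap_def t)
qed

lemma tmap_inj:
  assumes v: "valid d G t" and w: "w1 \<in> words d" "w2 \<in> words d"
    and s: "tmap t r1 w1 = Some p" "tmap t r2 w2 = Some p"
  shows "r1 = r2 \<and> w1 = w2"
proof -
  obtain Fm \<sigma> fs Fp where t: "t = (Fm, (\<sigma>, fs), Fp)" by (cases t) auto
  have a: "forest d Fm" "forest d Fp" "fleaves Fm = length fs" "fleaves Fp = length fs"
     "\<sigma> permutes {0..<length fs}" "set fs \<subseteq> G" using v by (auto simp: t valid_iff)
  obtain j1 v1 where 1: "locateF Fp r1 w1 = Some (j1, v1)" using s(1) by (cases "locateF Fp r1 w1") (auto simp: tmap_def t)
  obtain j2 v2 where 2: "locateF Fp r2 w2 = Some (j2, v2)" using s(2) by (cases "locateF Fp r2 w2") (auto simp: tmap_def t)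
  obtain u1 where u1: "j1 < length fs" "leaf_addr Fp j1 = (r1, u1)" "w1 = u1 @ v1" using locate_Some(2)[OF 1] a(4) by auto
  obtain u2 where u2: "j2 < length fs" "leaf_addr Fp j2 = (r2, u2)" "w2 = u2 @ v2" using locate_Some(2)[OF 2] a(4) by auto
  have sj: "\<sigma> j1 < length fs" "\<sigma> j2 < length fs" using permutes_in_image[OF a(5)] u1 u2 by auto
  obtain q1 x1 where q1: "leaf_addr Fm (\<sigma> j1) = (q1, x1)" by (cases "leaf_addr Fm (\<sigma> j1)")
  obtain q2 x2 where q2: "leaf_addr Fm (\<sigma> j2) = (q2, x2)" by (cases "leaf_addr Fm (\<sigma> j2)")
  have e: "q1 = q2" "x1 @ (fs ! j1) v1 = x2 @ (fs ! j2) v2" using s 1 2 q1 q2 by (auto simp: tmap_def t)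
  have l1: "locateF Fm q1 (x1 @ (fs ! j1) v1) = Some (\<sigma> j1, (fs ! j1) v1)" using locate_leaf_path(2)[OF _ q1] sj a(3) by simp
  have l2: "locateF Fm q2 (x2 @ (fs ! j2) v2) = Some (\<sigma> j2, (fs ! j2) v2)" using locate_leaf_path(2)[OF _ q2] sj a(3) by simp
  have "\<sigma> j1 = \<sigma> j2" "(fs ! j1) v1 = (fs ! j2) v2" using l1 l2 e by auto
  then have jj: "j1 = j2" using permutes_inj[OF a(5)] by (auto dest: injD)
  have f: "fs ! j1 \<in> aut d" using subsetD[OF subset_trans[OF a(6) G_aut] nth_mem[OF u1(1)]] .
  have "v1 \<in> words d" "v2 \<in> words d" using locateF_suffix[OF 1] locateF_suffix[OF 2] w by (auto simp: words_iff)
  then have "v1 = v2" using \<open>(fs ! j1) v1 = (fs ! j2) v2\<close> jj aut_inj_on[OF f] by (auto dest: inj_onD)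
  then show ?thesis using u1 u2 jj by simp
qed

lemma eventually_eq_tmap_tinv:
  assumes va: "valid d G a" and vb: "valid d G b" and h: "heads a = heads b"
    and s: "eventually_eq d (tmap a) (tmap b)"
  shows "eventually_eq d (tmap (tinv d a)) (tmap (tinv d b))"
proof -
  obtain N where N: "\<forall>r w. w \<in> words d \<longrightarrow> N \<le> length w \<longrightarrow> tmap a r w = tmap b r w"
    using s by (auto simp: eventually_eq_def)
  have via: "valid d G (tinv d a)" and vib: "valid d G (tinv d b)" using valid_tinv va vb by auto
  obtain Fa fa Ea where ae: "a = (Fa, fa, Ea)" by (cases a) auto
  obtain Fb fb Eb where be: "b = (Fb, fb, Eb)" by (cases b) auto
  have lF: "length Fa = length Fb" using h ae be by (simp add: heads_def)
  define M where "M = max (N + heightF Fa) (max (heightF Fa) (heightF Fb))"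
  show ?thesis unfolding eventually_eq_def
  proof (intro exI allI impI)
    fix r w assume w: "w \<in> words d" "M \<le> length w"
    show "tmap (tinv d a) r w = tmap (tinv d b) r w"
    proof (cases "r < length Fa")
      case False
      then show ?thesis using lF ae be by (cases fa, cases fb) (simp add: tinv_def tmap_None)
    next
      case True
      obtain p1 where p1: "tmap (tinv d a) r w = Some p1"
        using tmap_total[of d G Ea "winv d fa" Fa w r] via ae w True M_def by (auto simp: tinv_def)
      obtain p2 where p2: "tmap (tinv d b) r w = Some p2"
        using tmap_total[of d G Eb "winv d fb" Fb w r] vib be w True lF M_def by (auto simp: tinv_def)
      obtain r1 w1 where rw1: "p1 = (r1, w1)" by (cases p1)
      obtain r2 w2 where rw2: "p2 = (r2, w2)" by (cases p2)
      have o1: "w1 \<in> words d \<and> length w \<le> length w1 + heightF Fa"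
        using tmap_out[OF via G_aut w(1)] p1 rw1 ae by (simp add: tinv_def)
      have o2: "w2 \<in> words d" using tmap_out[OF vib G_aut w(1)] p2 rw2 by simp
      have "tmap a r1 w1 = Some (r, w)" using tmap_tinv[OF va w(1)] p1 rw1 by simp
      moreover have "tmap a r1 w1 = tmap b r1 w1" using N o1 w M_def by simp
      moreover have "tmap b r2 w2 = Some (r, w)" using tmap_tinv[OF vb w(1)] p2 rw2 by simp
      ultimately have "r1 = r2 \<and> w1 = w2" using tmap_inj[OF vb] o1 o2 by metis
      then show ?thesis using p1 p2 rw1 rw2 by simp
    qed
  qed
qed

lemma ginv_cls:
  assumes va: "valid d G a"
  shows "ginv d G (cls d G a) = cls d G (tinv d a)"
proof
  show "cls d G (tinv d a) \<subseteq> ginv d G (cls d G a)"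
    unfolding ginv_def using eqrel_refl by (cases a) (fastforce simp: in_cls tinv_def)
next
  show "ginv d G (cls d G a) \<subseteq> cls d G (tinv d a)"
  proof
    fix t assume "t \<in> ginv d G (cls d G a)"
    then obtain Fm f Fp where w: "(Fm, f, Fp) \<in> cls d G a" "((Fp, winv d f, Fm), t) \<in> eqrel d G"
      unfolding ginv_def by blast
    have e: "(a, (Fm, f, Fp)) \<in> eqrel d G" using w(1) in_cls by auto
    note i = eqrel_invariants[OF e va]
    have "eventually_eq d (tmap (tinv d a)) (tmap (tinv d (Fm, f, Fp)))" using eventually_eq_tmap_tinv[OF va] i by metis
    then have "(tinv d a, tinv d (Fm, f, Fp)) \<in> eqrel d G"
      using eqrel_if_eventually_eq valid_tinv va i tinv_heads_feet by metis
    moreover have "tinv d (Fm, f, Fp) = (Fp, winv d f, Fm)" by (simp add: tinv_def)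
    ultimately show "t \<in> cls d G (tinv d a)" using w(2) eqrel_trans in_cls by metis
  qed
qed

lemma pcomp_tmap_tinv_cancel:
  assumes va: "valid d G a" and vb: "valid d G b" and h: "heads a = heads b"
  shows "eventually_eq d (pcomp (tmap a) (pcomp (tmap (tinv d a)) (tmap b))) (tmap b)"
proof -
  obtain Hb where Hb: "\<forall>r w r' w'. w \<in> words d \<longrightarrow> tmap b r w = Some (r', w') \<longrightarrow> w' \<in> words d \<and> length w \<le> length w' + Hb"
    using bounded_loss_tmap[OF vb] by (auto simp: bounded_loss_def)
  obtain Fa fa Ea where ae: "a = (Fa, fa, Ea)" by (cases a) auto
  have vi: "valid d G (tinv d a)" using valid_tinv[OF va] .
  show ?thesis unfolding eventually_eq_def
  proof (intro exI allI impI)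
    fix r w assume w: "w \<in> words d" "heightF Fa + Hb \<le> length w"
    show "pcomp (tmap a) (pcomp (tmap (tinv d a)) (tmap b)) r w = tmap b r w"
    proof (cases "tmap b r w")
      case None then show ?thesis by (simp add: pcomp_def)
    next
      case (Some p)
      obtain r' w' where p: "p = (r', w')" by (cases p)
      have o: "w' \<in> words d" "length w \<le> length w' + Hb" using Hb w(1) Some p by auto
      have r': "r' < length Fa" using tmap_root[OF vb] Some p h ae by (simp add: heads_def)
      obtain p1 where p1: "tmap (tinv d a) r' w' = Some p1"
        using tmap_total[of d G Ea "winv d fa" Fa w' r'] vi ae o w r' by (auto simp: tinv_def)
      obtain r1 w1 where rw1: "p1 = (r1, w1)" by (cases p1)
      have "tmap a r1 w1 = Some (r', w')" using tmap_tinv[OF va o(1)] p1 rw1 by simp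
      then show ?thesis using Some p p1 rw1 by (simp add: pcomp_def)
    qed
  qed
qed

lemma has_feet_cls: "valid d G a \<Longrightarrow> has_feet (cls d G a) m \<longleftrightarrow> feet a = m"
proof
  assume v: "valid d G a" and "has_feet (cls d G a) m"
  then obtain Fm f Fp where "(Fm, f, Fp) \<in> cls d G a" "length Fp = m" by (auto simp: has_feet_def)
  then show "feet a = m" using eqrel_invariants[OF _ v] in_cls by (fastforce simp: feet_def)
next
  assume "valid d G a" "feet a = m"
  then show "has_feet (cls d G a) m" using eqrel_refl by (cases a) (fastforce simp: has_feet_def in_cls feet_def)
qed

lemma has_heads_cls: "valid d G a \<Longrightarrow> has_heads (cls d G a) m \<longleftrightarrow> heads a = m"
proof
  assume v: "valid d G a" and "has_heads (cls d G a) m"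
  then obtain Fm f Fp where "(Fm, f, Fp) \<in> cls d G a" "length Fm = m" by (auto simp: has_heads_def)
  then show "heads a = m" using eqrel_invariants[OF _ v] in_cls by (fastforce simp: heads_def)
next
  assume "valid d G a" "heads a = m"
  then show "has_heads (cls d G a) m" using eqrel_refl by (cases a) (fastforce simp: has_heads_def in_cls heads_def)
qed

end

section \<open>Cosets of the wreath subgroup\<close>

definition tdiag :: "nat \<Rightarrow> wel \<Rightarrow> triple" where
  "tdiag n w = (triv n, w, triv n)"

lemma tdiag_heads_feet [simp]: "heads (tdiag n w) = n" "feet (tdiag n w) = n"
  by (simp_all add: tdiag_def heads_def feet_def triv_def)

lemma tid_tdiag: "tid n = tdiag n (id, replicate n id)"
  by (simp add: tid_def tdiag_def)

lemma wmult_winv: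
  assumes "w \<in> wr n S" "S \<subseteq> aut d"
  shows "wmult w (winv d w) = (id, replicate n id)"
proof -
  obtain \<sigma> fs where w: "w = (\<sigma>, fs)" "\<sigma> permutes {0..<n}" "length fs = n" "set fs \<subseteq> S"
    using assms(1) by (cases w) (auto simp: wr_def)
  have "fs ! inv \<sigma> i \<circ> ainv d (fs ! inv \<sigma> i) = id" if "i < n" for i
    using aut_comp_ainv assms(2) w permutes_in_image[OF permutes_inv[OF w(2)]] that
    by (metis atLeastLessThan_iff le0 nth_mem subsetD)
  then show ?thesis
    using w permutes_inv_o(1)[OF w(2)] by (auto simp: wmult_def winv_def intro!: nth_equalityI)
qed

locale subgroup_setting = self_similar_group +
  fixes H :: "(nat list \<Rightarrow> nat list) set"
  assumes subgrp_H: "subgrp d H" and H_sub: "H \<subseteq> G"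
begin

lemma H_comp: "\<forall>f\<in>H. \<forall>g\<in>H. f \<circ> g \<in> H"
  using subgrp_H by (auto simp: subgrp_def)

lemma wr_H_id: "(id, replicate n id) \<in> wr n H"
  using subgrp_H by (auto simp: subgrp_def wr_def permutes_id)

lemma wmult_wr_H: "w1 \<in> wr n H \<Longrightarrow> w2 \<in> wr n H \<Longrightarrow> wmult w1 w2 \<in> wr n H"
  using wmult_wr[OF H_comp] by (cases w1, cases w2) auto

lemma winv_wr_H: "w \<in> wr n H \<Longrightarrow> winv d w \<in> wr n H"
  using winv_wr[of H d] subgrp_H by (cases w) (auto simp: subgrp_def)

lemma valid_tdiag: "w \<in> wr n G \<Longrightarrow> valid d G (tdiag n w)"
  by (cases w) (auto simp: valid_def tdiag_def triv_def forest_def wr_def fleaves_replicate)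

lemma valid_tdiag_H: "w \<in> wr n H \<Longrightarrow> valid d G (tdiag n w)"
  using valid_tdiag wr_mono[OF H_sub] by blast

lemma gmult_tdiag_tdiag:
  "w1 \<in> wr n G \<Longrightarrow> w2 \<in> wr n G \<Longrightarrow>
    gmult d G (cls d G (tdiag n w1)) (cls d G (tdiag n w2)) = cls d G (tdiag n (wmult w1 w2))"
  using gmult_cls_cls[of "triv n" w1 "triv n" w2 "triv n"] valid_tdiag
  by (simp add: tdiag_def tmult_def)

lemma gmult_cls_tid:
  assumes va: "valid d G a"
  shows "gmult d G (cls d G a) (cls d G (tid (feet a))) = cls d G a"
proof (rule gmult_cls_eqI[OF va valid_tid _ va])
  show "eventually_eq d (tmap a) (pcomp (tmap a) (tmap (tid (feet a))))"
    by (rule eventually_eqI) (cases a, auto simp: pcomp_def tmap_tid feet_def tmap_None)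
qed (simp_all add: tid_tdiag)

lemma coset_iff:
  assumes "valid d G a"
  shows "Z \<in> coset d G H (cls d G a)
    \<longleftrightarrow> (\<exists>w \<in> wr (feet a) H. Z = gmult d G (cls d G a) (cls d G (tdiag (feet a) w)))"
  using has_feet_cls[OF assms] by (auto simp: coset_def tdiag_def)

lemma cls_mem_coset: "valid d G a \<Longrightarrow> cls d G a \<in> coset d G H (cls d G a)"
  using coset_iff gmult_cls_tid wr_H_id tid_tdiag by metis

lemma coset_gmult_tdiag:
  assumes va: "valid d G a" and w: "w \<in> wr (feet a) H"
  shows "coset d G H (gmult d G (cls d G a) (cls d G (tdiag (feet a) w))) = coset d G H (cls d G a)"
proof -
  define n where "n = feet a"
  note H_G = wr_mono[OF H_sub]
  have vw: "valid d G (tdiag n w)" using valid_tdiag_H w n_def by simp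
  obtain p where p: "valid d G p" "gmult d G (cls d G a) (cls d G (tdiag n w)) = cls d G p" "feet p = n"
    using gmult_cls[OF va vw] n_def by auto
  have shift: "gmult d G (cls d G b) (cls d G (tdiag n u))
      = gmult d G (cls d G c) (cls d G (tdiag n (wmult v u)))"
    if "valid d G b" "valid d G c" "feet b = n" "feet c = n" "u \<in> wr n H" "v \<in> wr n H"
      "cls d G b = gmult d G (cls d G c) (cls d G (tdiag n v))" for b c u v
    using that gmult_assoc[OF that(2) valid_tdiag_H valid_tdiag_H] gmult_tdiag_tdiag H_G by simp
  have "cls d G a = gmult d G (cls d G a) (cls d G (tdiag n (wmult w (winv d w))))"
    using gmult_cls_tid[OF va] wmult_winv[OF w] H_sub G_aut tid_tdiag n_def by force
  also have "\<dots> = gmult d G (cls d G a) (gmult d G (cls d G (tdiag n w)) (cls d G (tdiag n (winv d w))))"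
    using gmult_tdiag_tdiag H_G w winv_wr_H n_def by simp
  also have "\<dots> = gmult d G (cls d G p) (cls d G (tdiag n (winv d w)))"
    using gmult_assoc[OF va vw valid_tdiag_H[OF winv_wr_H[OF w]]] p(2) n_def by simp
  finally have a_p: "cls d G a = gmult d G (cls d G p) (cls d G (tdiag n (winv d w)))" .
  have "coset d G H (cls d G p) = coset d G H (cls d G a)"
  proof (intro equalityI subsetI)
    fix Z assume "Z \<in> coset d G H (cls d G p)"
    then show "Z \<in> coset d G H (cls d G a)"
      using coset_iff[OF p(1)] coset_iff[OF va] shift[OF p(1) va] p n_def w wmult_wr_H by metis
  next
    fix Z assume "Z \<in> coset d G H (cls d G a)"
    then show "Z \<in> coset d G H (cls d G p)"
      using coset_iff[OF p(1)] coset_iff[OF va] shift[OF va p(1)] a_p p n_def w winv_wr_H wmult_wr_H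
      by metis
  qed
  then show ?thesis using p(2) n_def by simp
qed

lemma coset_eq_heads_feet:
  assumes va: "valid d G a" and vb: "valid d G b" and eq: "coset d G H (cls d G a) = coset d G H (cls d G b)"
  shows "heads a = heads b \<and> feet a = feet b"
proof -
  obtain w where w: "w \<in> wr (feet b) H" "cls d G a = gmult d G (cls d G b) (cls d G (tdiag (feet b) w))"
    using cls_mem_coset[OF va] eq coset_iff[OF vb] by auto
  obtain p where "valid d G p" "cls d G a = cls d G p" "heads p = heads b" "feet p = feet b"
    using gmult_cls[OF vb valid_tdiag_H[OF w(1)]] w(2) by auto
  then show ?thesis using eventually_eq_if_cls_eq[OF va] by metis
qed

end

section \<open>Finitary automorphisms\<close>

definition finitary :: "nat \<Rightarrow> nat \<Rightarrow> (nat list \<Rightarrow> nat list) set" where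
  "finitary d D = {g. (\<forall>w. w \<notin> words d \<longrightarrow> g w = w) \<and> (\<forall>w\<in>words d. g w \<in> words d \<and> length (g w) = length w)
      \<and> (\<forall>u\<in>words d. \<forall>v\<in>words d. length u = D \<longrightarrow> g (u @ v) = g u @ v)}"

lemma append_suffix_beyond_depth:
  assumes "\<forall>u\<in>words d. \<forall>v\<in>words d. length u = D \<longrightarrow> g (u @ v) = g u @ v" "\<forall>w\<in>words d. length (g w) = length w"
    "u \<in> words d" "v \<in> words d" "D \<le> length u"
  shows "g (u @ v) = g u @ v"
proof -
  define u1 where "u1 = take D u"
  define u2 where "u2 = drop D u"
  have w: "u1 \<in> words d" "u2 \<in> words d" "u2 @ v \<in> words d" using assms(3,4)
    by (auto simp: u1_def u2_def words_iff dest: in_set_takeD in_set_dropD)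
  have l: "length u1 = D" using assms(5) by (simp add: u1_def)
  have "g (u @ v) = g (u1 @ (u2 @ v))" by (metis append_assoc append_take_drop_id u1_def u2_def)
  also have "\<dots> = g u1 @ u2 @ v" using assms(1) w l by blast
  also have "g u = g u1 @ u2" using assms(1) w l by (metis append_take_drop_id u1_def u2_def)
  ultimately show ?thesis by simp
qed

lemma finitary_ge: "g \<in> finitary d D \<Longrightarrow> u \<in> words d \<Longrightarrow> v \<in> words d \<Longrightarrow> D \<le> length u \<Longrightarrow> g (u @ v) = g u @ v"
  using append_suffix_beyond_depth[of d D g u v] by (auto simp: finitary_def)

lemma finitary_id: "id \<in> finitary d D"
  by (simp add: finitary_def)

lemma finitary_comp: "g \<in> finitary d D \<Longrightarrow> a \<in> finitary d D \<Longrightarrow> g \<circ> a \<in> finitary d D"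
  unfolding finitary_def by auto

lemma finitary_state:
  assumes g: "g \<in> finitary d D" and y: "y < d"
  shows "state d g y \<in> finitary d D"
proof -
  have a: "\<forall>w. w \<notin> words d \<longrightarrow> g w = w" "\<forall>w\<in>words d. g w \<in> words d \<and> length (g w) = length w"
    using g by (auto simp: finitary_def)
  have 1: "\<forall>w. w \<notin> words d \<longrightarrow> state d g y w = w" by (simp add: state_def)
  have 2: "\<forall>w\<in>words d. state d g y w \<in> words d \<and> length (state d g y w) = length w"
  proof
    fix w assume w: "w \<in> words d"
    then have yw: "y # w \<in> words d" using y by (simp add: words_iff)
    then have "g (y # w) \<in> words d" "length (g (y # w)) = Suc (length w)" using a by auto
    then show "state d g y w \<in> words d \<and> length (state d g y w) = length w"
      using w by (cases "g (y # w)") (auto simp: state_def words_iff)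
  qed
  have 3: "\<forall>u\<in>words d. \<forall>v\<in>words d. length u = D \<longrightarrow> state d g y (u @ v) = state d g y u @ v"
  proof (intro ballI impI)
    fix u v assume u: "u \<in> words d" and v: "v \<in> words d" and l: "length u = D"
    have yu: "y # u \<in> words d" using u y by (simp add: words_iff)
    have "g ((y # u) @ v) = g (y # u) @ v" using finitary_ge[OF g yu v] l by simp
    moreover have "g (y # u) \<noteq> []" using a yu by fastforce
    moreover have "u @ v \<in> words d" using u v by (simp add: words_iff)
    ultimately show "state d g y (u @ v) = state d g y u @ v" using u by (simp add: state_def)
  qed
  show ?thesis using 1 2 3 by (simp add: finitary_def)
qed

lemma finitary_D:
  assumes "g \<in> finitary d D"
  shows "\<And>w. w \<notin> words d \<Longrightarrow> g w = w" "\<And>w. w \<in> words d \<Longrightarrow> g w \<in> words d"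
    "\<And>w. w \<in> words d \<Longrightarrow> length (g w) = length w"
    "\<And>u v. u \<in> words d \<Longrightarrow> v \<in> words d \<Longrightarrow> length u = D \<Longrightarrow> g (u @ v) = g u @ v"
  using assms unfolding finitary_def by simp_all

lemma finitary_eq_if_eq_on_short_words:
  assumes g1: "g1 \<in> finitary d D" and g2: "g2 \<in> finitary d D"
    and eq: "\<And>w. w \<in> words d \<Longrightarrow> length w \<le> D \<Longrightarrow> g1 w = g2 w"
  shows "g1 = g2"
proof
  fix w
  show "g1 w = g2 w"
  proof (cases "w \<in> words d \<and> D < length w")
    case True
    define u where "u = take D w"
    define v where "v = drop D w"
    have uv: "u \<in> words d" "v \<in> words d" "length u = D" "w = u @ v" using True
      by (auto simp: u_def v_def words_iff dest: in_set_takeD in_set_dropD)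
    then show ?thesis using finitary_D(4)[OF g1 uv(1-3)] finitary_D(4)[OF g2 uv(1-3)] eq by simp
  next
    case False
    then show ?thesis using eq[of w] finitary_D(1)[OF g1, of w] finitary_D(1)[OF g2, of w] by (cases "w \<in> words d") auto
  qed
qed

lemma finite_finitary: "finite (finitary d D)"
proof -
  define S where "S = {w. set w \<subseteq> {0..<d} \<and> length w \<le> D}"
  have S: "finite S" "\<And>w. w \<in> S \<longleftrightarrow> w \<in> words d \<and> length w \<le> D"
    by (simp_all add: S_def words_iff finite_lists_length_le)
  have "g1 = g2" if "g1 \<in> finitary d D" "g2 \<in> finitary d D" "restrict g1 S = restrict g2 S" for g1 g2
  proof (rule finitary_eq_if_eq_on_short_words[OF that(1,2)])
    fix w assume "w \<in> words d" "length w \<le> D"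
    then show "g1 w = g2 w" using S(2) that(3) by (metis restrict_apply')
  qed
  then have "inj_on (\<lambda>g. restrict g S) (finitary d D)" by (auto intro: inj_onI)
  moreover have "restrict g S \<in> S \<rightarrow>\<^sub>E S" if "g \<in> finitary d D" for g
    unfolding restrict_PiE_iff using finitary_D(2,3)[OF that] S(2) by simp
  then have "finite ((\<lambda>g. restrict g S) ` finitary d D)"
    using finite_PiE[OF S(1)] S(1) by (metis (no_types, lifting) finite_subset image_subsetI)
  ultimately show ?thesis by (rule finite_imageD[rotated])
qed

section \<open>Elements of \<open>V\<^sub>d\<close> in \<open>Aut(T\<^sub>d)\<close> are finitary\<close>

lemma aut_map_boundary_nth:
  assumes "f \<in> aut d" "\<zeta> \<in> boundary d" "i < N"
  shows "f (map \<zeta> [0..<N]) ! i = bdry_act f \<zeta> i"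
proof -
  have "map \<zeta> [0..<N] \<in> words d" using assms(2) by (auto simp: words_iff boundary_def)
  then show ?thesis using aut_nth_take[OF assms(1)] assms(3) by (simp add: bdry_act_def take_map)
qed

lemma boundary_bump:
  assumes "2 \<le> d" "\<xi> \<in> boundary d"
  shows "\<xi>(j := (\<xi> j + 1) mod d) \<in> boundary d" "(\<xi> j + 1) mod d \<noteq> \<xi> j"
proof -
  show "\<xi>(j := (\<xi> j + 1) mod d) \<in> boundary d" using assms by (simp add: boundary_def)
  show "(\<xi> j + 1) mod d \<noteq> \<xi> j"
  proof (cases "\<xi> j + 1 < d")
    case False
    then have "\<xi> j + 1 = d" using assms(2) by (simp add: boundary_def not_less le_antisym Suc_leI)
    then show ?thesis using assms(1) by simp
  qed simp
qed

(* If f acts on the cone below u as the prefix replacement u \<mapsto> s, then |s| = |u|: otherwise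
   changing one letter of a boundary point beyond u changes its image too early (|s| < |u|)
   or not at all (|s| > |u|, contradicting injectivity). *)

lemma prefix_replacement_length:
  assumes d: "2 \<le> d" and f: "f \<in> aut d" and \<xi>: "\<xi> \<in> boundary d" "is_prefix u \<xi>"
    and act: "\<And>\<zeta> i. \<zeta> \<in> boundary d \<Longrightarrow> is_prefix u \<zeta> \<Longrightarrow>
      bdry_act f \<zeta> i = (if i < length s then s ! i else \<zeta> (i - length s + length u))"
  shows "length s = length u"
proof (rule ccontr)
  define l where "l = length u"
  define chg where "chg = (\<lambda>j. \<xi>(j := (\<xi> j + 1) mod d))"
  have chg: "chg j \<in> boundary d" "chg j j \<noteq> \<xi> j" for j
    using boundary_bump[OF d \<xi>(1)] by (simp_all add: chg_def)
  have chg_prefix: "is_prefix u (chg j)" if "l \<le> j" for j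
    using \<xi>(2) that by (auto simp: is_prefix_def chg_def l_def)
  assume "length s \<noteq> length u"
  then consider "length s < l" | "l < length s" by (fastforce simp: l_def)
  then show False
  proof cases
    case 1
    define j where "j = l - 1 - length s + l"
    have j: "l \<le> j" "\<not> l - 1 < length s" using 1 by (simp_all add: j_def)
    have "f (map (chg j) [0..<l]) = f (map \<xi> [0..<l])" using j(1) by (simp add: chg_def)
    moreover have "l - 1 < l" using 1 by simp
    ultimately have "bdry_act f (chg j) (l - 1) = bdry_act f \<xi> (l - 1)"
      using aut_map_boundary_nth[OF f] chg(1) \<xi>(1) by metis
    moreover have "bdry_act f (chg j) (l - 1) = chg j j" "bdry_act f \<xi> (l - 1) = \<xi> j"
      using act[OF chg(1) chg_prefix[OF j(1)]] act[OF \<xi>] j by (simp_all add: j_def l_def)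
    ultimately show False using chg(2) by metis
  next
    case 2
    define N where "N = Suc (length s)"
    define \<zeta> where "\<zeta> = chg (length s)"
    have \<zeta>: "\<zeta> \<in> boundary d" "is_prefix u \<zeta>" using chg chg_prefix 2 by (simp_all add: \<zeta>_def)
    have "f (map \<xi> [0..<N]) ! i = f (map \<zeta> [0..<N]) ! i" if "i < N" for i
    proof -
      have "bdry_act f \<xi> i = bdry_act f \<zeta> i"
      proof (cases "i < length s")
        case False
        then have "i - length s + l = l" "l \<noteq> length s" using that 2 by (simp_all add: N_def)
        then show ?thesis using act[OF \<xi>, of i] act[OF \<zeta>, of i] False by (simp add: \<zeta>_def chg_def l_def)
      qed (simp add: act[OF \<xi>] act[OF \<zeta>])
      then show ?thesis using aut_map_boundary_nth[OF f] \<zeta>(1) \<xi>(1) that by metis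
    qed
    moreover have words: "map \<xi> [0..<N] \<in> words d" "map \<zeta> [0..<N] \<in> words d"
      using \<xi>(1) \<zeta>(1) by (auto simp: words_iff boundary_def)
    ultimately have "f (map \<xi> [0..<N]) = f (map \<zeta> [0..<N])"
      using aut_length[OF f] by (intro nth_equalityI) simp_all
    moreover have "map \<xi> [0..<N] ! length s \<noteq> map \<zeta> [0..<N] ! length s"
      using chg(2)[of "length s"] by (simp add: N_def \<zeta>_def del: upt_Suc)
    ultimately show False using aut_inj_on[OF f] words by (metis inj_onD)
  qed
qed

lemma in_Vd_finitary:
  assumes d: "2 \<le> d" and f: "f \<in> aut d" and "in_Vd d f"
  shows "\<exists>D. f \<in> finitary d D"
proof -
  obtain C1 C2 \<beta> where C1: "complete_prefix_code d C1"
    and act: "\<forall>\<xi>\<in>boundary d. \<forall>u\<in>C1. is_prefix u \<xi> \<longrightarrow>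
      bdry_act f \<xi> = (\<lambda>i. if i < length (\<beta> u) then \<beta> u ! i else \<xi> (i - length (\<beta> u) + length u))"
    using assms(3) unfolding in_Vd_def by blast
  define D where "D = Max (insert 0 (length ` C1))"
  have "f (u0 @ v) = f u0 @ v" if u0: "u0 \<in> words d" "length u0 = D" and v: "v \<in> words d" for u0 v
  proof -
    define W where "W = u0 @ v"
    define \<xi> where "\<xi> = (\<lambda>i. if i < length W then W ! i else 0)"
    have W: "W \<in> words d" "map \<xi> [0..<length W] = W" using u0 v by (auto simp: W_def \<xi>_def words_iff intro: nth_equalityI)
    have \<xi>: "\<xi> \<in> boundary d" using W(1) d by (auto simp: \<xi>_def words_iff boundary_def dest: nth_mem)
    then obtain u where u: "u \<in> C1" "is_prefix u \<xi>" using C1 by (auto simp: complete_prefix_code_def)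
    have lu: "length u \<le> D" using u(1) C1 by (auto simp: D_def complete_prefix_code_def)
    have act_u: "\<And>\<zeta> i. \<zeta> \<in> boundary d \<Longrightarrow> is_prefix u \<zeta> \<Longrightarrow>
        bdry_act f \<zeta> i = (if i < length (\<beta> u) then \<beta> u ! i else \<zeta> (i - length (\<beta> u) + length u))"
      using act u(1) by simp
    have "length (\<beta> u) = length u" using prefix_replacement_length[OF d f \<xi> u(2) act_u] .
    then have fW: "f W ! i = (if i < length u then \<beta> u ! i else W ! i)" if "i < length W" for i
      using aut_map_boundary_nth[OF f \<xi> that] act_u[OF \<xi> u(2)] W(2) that by (simp add: \<xi>_def)
    have "take D (f W) = f u0" using aut_take_prefix[OF f u0(1) v] u0(2) by (simp add: W_def)
    then have "f W ! i = (f u0 @ v) ! i" if "i < length W" for i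
    proof (cases "i < D")
      case True
      then show ?thesis using \<open>take D (f W) = f u0\<close> aut_length[OF f u0(1)] u0(2)
        by (metis nth_append nth_take)
    next
      case False
      then show ?thesis using fW[OF that] lu u0(2) aut_length[OF f u0(1)] by (simp add: nth_append W_def)
    qed
    then show ?thesis using aut_length[OF f W(1)] aut_length[OF f u0(1)] by (auto simp: W_def intro: nth_equalityI)
  qed
  then have "f \<in> finitary d D" using aut_outside[OF f] aut_words[OF f] aut_length[OF f] by (simp add: finitary_def)
  then show ?thesis by blast
qed

lemma finite_Vd_subset_finitary:
  assumes "2 \<le> d" "finite A" "A \<subseteq> aut d" "\<forall>a\<in>A. in_Vd d a"
  shows "\<exists>D. A \<subseteq> finitary d D"
proof -
  have "\<forall>a\<in>A. \<exists>D. a \<in> finitary d D" using in_Vd_finitary[OF assms(1)] assms(3,4) by blast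
  from bchoice[OF this] obtain Df where Df: "\<forall>a\<in>A. a \<in> finitary d (Df a)" ..
  define D where "D = Max (insert 0 (Df ` A))"
  have "a \<in> finitary d D" if "a \<in> A" for a
  proof -
    have "Df a \<le> D" using that assms(2) by (simp add: D_def)
    moreover have "a \<in> finitary d (Df a)" using Df that by blast
    ultimately show ?thesis
      using append_suffix_beyond_depth[of d "Df a" a] unfolding finitary_def by simp
  qed
  then show ?thesis by blast
qed

section \<open>Counting forests\<close>

lemma height_lt_nleaves:
  "full d t \<Longrightarrow> 2 \<le> d \<Longrightarrow> height t + 1 \<le> nleaves t"
  "(\<forall>t\<in>set ts. full d t) \<Longrightarrow> 2 \<le> d \<Longrightarrow> ts \<noteq> [] \<Longrightarrow> heightF ts + length ts \<le> fleaves ts"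
proof (induction t and ts rule: height_heightF.induct)
  case 1 then show ?case by simp
next
  case (2 ts)
  have l: "length ts = d" and f: "\<forall>t\<in>set ts. full d t" using 2(2) by simp_all
  then have "ts \<noteq> []" using 2(3) by auto
  then have "heightF ts + length ts \<le> fleaves ts" using 2(1) f 2(3) by blast
  then show ?case using l 2(3) by (simp add: nleaves_Nd)
next
  case 3 then show ?case by simp
next
  case (4 t ts)
  have ft: "full d t" and fts: "\<forall>t\<in>set ts. full d t" using 4(3) by simp_all
  have a: "height t + 1 \<le> nleaves t" using 4(1) ft 4(4) by blast
  show ?case
  proof (cases "ts = []")
    case True then show ?thesis using a by simp
  next
    case False
    have b: "heightF ts + length ts \<le> fleaves ts" using 4(2) fts 4(4) False by blast
    have "max (height t) (heightF ts) \<le> height t + heightF ts" by simp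
    then show ?thesis using a b by simp
  qed
qed

lemma height_le_heightF: "s \<in> set ts \<Longrightarrow> height s \<le> heightF ts"
  by (induction ts) auto

lemma finite_trees: "finite {t. full d t \<and> height t \<le> h}"
proof (induction h)
  case 0
  have "{t. full d t \<and> height t \<le> 0} \<subseteq> {Lf}"
  proof
    fix t assume "t \<in> {t. full d t \<and> height t \<le> 0}"
    then show "t \<in> {Lf}" by (cases t) simp_all
  qed
  then show ?case by (rule finite_subset) simp
next
  case (Suc h)
  define L where "L = {ts. set ts \<subseteq> {t. full d t \<and> height t \<le> h} \<and> length ts = d}"
  have sub: "{t. full d t \<and> height t \<le> Suc h} \<subseteq> insert Lf (Nd ` L)"
  proof
    fix t assume t: "t \<in> {t. full d t \<and> height t \<le> Suc h}"
    show "t \<in> insert Lf (Nd ` L)"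
    proof (cases t)
      case Lf then show ?thesis by simp
    next
      case (Nd ts)
      have f: "length ts = d" "\<forall>s\<in>set ts. full d s" "heightF ts \<le> h" using t Nd by simp_all
      have "ts \<in> L" unfolding L_def using f height_le_heightF by fastforce
      then show ?thesis using Nd by simp
    qed
  qed
  have "finite L" unfolding L_def by (rule finite_lists_length_eq[OF Suc.IH])
  then have "finite (insert Lf (Nd ` L))" by simp
  then show ?case by (rule finite_subset[OF sub])
qed

lemma finite_forests:
  assumes "2 \<le> d"
  shows "finite {T. forest d T \<and> fleaves T = q}"
proof -
  have sub: "{T. forest d T \<and> fleaves T = q} \<subseteq> {ts. set ts \<subseteq> {t. full d t \<and> height t \<le> q} \<and> length ts \<le> q}"
  proof
    fix T assume T: "T \<in> {T. forest d T \<and> fleaves T = q}"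
    have ft: "\<forall>t\<in>set T. full d t" using T by (simp add: forest_def)
    have 1: "\<And>t. t \<in> set T \<Longrightarrow> nleaves t \<le> fleaves T"
    proof (induction T)
      case Nil then show ?case by simp
    next
      case (Cons a T)
      show ?case
      proof (cases "t = a")
        case True then show ?thesis by simp
      next
        case False
        then have "nleaves t \<le> fleaves T" using Cons by simp
        then show ?thesis by simp
      qed
    qed
    have 2: "length T \<le> fleaves T" using ft
    proof (induction T)
      case Nil then show ?case by simp
    next
      case (Cons t T) then show ?case using height_lt_nleaves(1)[OF _ assms, of t] by simp
    qed
    have "\<And>t. t \<in> set T \<Longrightarrow> height t \<le> q" using 1 height_lt_nleaves(1)[OF _ assms] ft T by fastforce
    then show "T \<in> {ts. set ts \<subseteq> {t. full d t \<and> height t \<le> q} \<and> length ts \<le> q}" using ft 2 T by auto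
  qed
  show ?thesis by (rule finite_subset[OF sub finite_lists_length_le[OF finite_trees]])
qed

section \<open>Splittings from coarsely self-similar subgroups\<close>

locale coarse_setting = subgroup_setting +
  fixes A :: "(nat list \<Rightarrow> nat list) set" and D :: nat
  assumes d_ge_2: "2 \<le> d" and A_finitary: "A \<subseteq> finitary d D"
    and coarsely_self_similar_H: "coarsely_self_similar d A H"
begin

(* M contains H, is self-similar and absorbs H on the right, so cloning keeps S_n wr M inside
   the wreath products over M; the finitary factors of its elements range over a finite set. *)

definition M :: "(nat list \<Rightarrow> nat list) set" where
  "M = {f \<in> G. \<exists>b \<in> finitary d D. \<exists>h \<in> H. f = b \<circ> h}"

lemma M_G: "M \<subseteq> G"
  by (auto simp: M_def)

lemma H_M: "H \<subseteq> M"
proof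
  fix h assume "h \<in> H"
  then show "h \<in> M"
    using H_sub finitary_id unfolding M_def by (intro CollectI conjI bexI[of _ id] bexI[of _ h]) auto
qed

lemma M_comp_H: "\<forall>f\<in>M. \<forall>g\<in>H. f \<circ> g \<in> M"
proof (intro ballI)
  fix f g assume f: "f \<in> M" and g: "g \<in> H"
  obtain b h where bh: "b \<in> finitary d D" "h \<in> H" "f = b \<circ> h" using f by (auto simp: M_def)
  have "f \<circ> g \<in> G" using G_comp f g H_sub M_G by blast
  moreover have "h \<circ> g \<in> H" "f \<circ> g = b \<circ> (h \<circ> g)" using H_comp bh g by (auto simp: comp_assoc)
  ultimately show "f \<circ> g \<in> M" using bh unfolding M_def by blast
qed

lemma M_self_similar: "self_similar d M"
  unfolding self_similar_def
proof (intro ballI allI impI)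
  fix f x assume f: "f \<in> M" and x: "x < d"
  obtain b h where bh: "b \<in> finitary d D" "h \<in> H" "f = b \<circ> h" using f by (auto simp: M_def)
  have h: "h \<in> aut d" using bh H_sub G_aut by blast
  have sG: "state d f x \<in> G" using self_similar_G f M_G x by (auto simp: self_similar_def)
  have sc: "state d f x = state d b (rho d h x) \<circ> state d h x" using state_comp[OF h x] bh by simp
  have b': "state d b (rho d h x) \<in> finitary d D"
    using finitary_state[OF bh(1)] wreath_recursion(2)[OF h x, of "[]"] by (simp add: words_def)
  have "state d h x \<in> H \<union> A" using coarsely_self_similar_H bh(2) x by (auto simp: coarsely_self_similar_def)
  then show "state d f x \<in> M"
  proof
    assume "state d h x \<in> H"
    then show ?thesis using sG sc b' unfolding M_def by blast
  next
    assume "state d h x \<in> A"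
    then have "state d b (rho d h x) \<circ> state d h x \<in> finitary d D" using finitary_comp[OF b'] A_finitary by blast
    then show ?thesis
      using sG sc subgrp_H unfolding M_def subgrp_def
      by (intro CollectI conjI bexI[of _ "state d b (rho d h x) \<circ> state d h x"] bexI[of _ id]) auto
  qed
qed

lemma valid_leaf_triple: "forest d T \<Longrightarrow> fleaves T = m \<Longrightarrow> e \<in> wr m G \<Longrightarrow> valid d G (T, e, triv m)"
  by (cases e) (auto simp: valid_def wr_def forest_def triv_def fleaves_replicate)

lemma valid_caret:
  assumes "k < m" "w \<in> wr (m + d - 1) H"
  shows "valid d G (caretF d m k, w, triv (m + d - 1))"
proof -
  have "fleaves (caretF d m k) = m + d - 1"
    using fleaves_attach(2)[OF d_pos, of k "triv m"] assms(1) d_pos by (simp add: caretF_def triv_def fleaves_replicate)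
  moreover have "forest d (triv m)" by (simp add: forest_def triv_def)
  then have "forest d (caretF d m k)" using forest_attachF by (simp add: caretF_def)
  moreover have "w \<in> wr (m + d - 1) G" using wr_mono[OF H_sub] assms(2) .
  ultimately show ?thesis
    by (cases w) (auto simp: valid_def wr_def forest_def triv_def fleaves_replicate)
qed

definition M_shaped :: "nat \<Rightarrow> triple set \<Rightarrow> bool" where
  "M_shaped q Z \<longleftrightarrow> (\<exists>T e. forest d T \<and> fleaves T = q \<and> e \<in> wr q M \<and> Z = cls d G (T, e, triv q))"

lemma M_shaped_gmult_caret:
  assumes "M_shaped m P" "k < m" "w \<in> wr (m + d - 1) H"
  shows "M_shaped (m + d - 1) (gmult d G P (cls d G (caretF d m k, w, triv (m + d - 1))))"
proof -
  obtain T e where T: "forest d T" "fleaves T = m" "e \<in> wr m M" "P = cls d G (T, e, triv m)"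
    using assms(1) by (auto simp: M_shaped_def)
  obtain \<sigma> es where e: "e = (\<sigma>, es)" "\<sigma> permutes {0..<m}" "length es = m" using T(3) by (cases e) (auto simp: wr_def)
  have \<sigma>k: "\<sigma> k < m" using permutes_in_image[OF e(2)] assms(2) by simp
  have vT: "valid d G (T, e, triv m)" using valid_leaf_triple T(1,2) wr_mono[OF M_G T(3)] by blast
  have k: "k < length (snd (fst (snd (T, e, triv m))))" using e assms(2) by simp
  have ex: "expand d (T, e, triv m) k = (attachF d (\<sigma> k) T, kappa d e k, caretF d m k)"
    by (simp add: expand_def e caretF_def)
  have kappa: "kappa d e k \<in> wr (m + d - 1) M"
    using kappa_wr[of \<sigma> es m M k d] T(3) e assms(2) d_pos M_G G_aut M_self_similar by auto
  have "P = cls d G (attachF d (\<sigma> k) T, kappa d e k, caretF d m k)"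
    using T(4) cls_eq[OF expand_eqrel[OF vT k]] ex by simp
  then have "gmult d G P (cls d G (caretF d m k, w, triv (m + d - 1)))
      = cls d G (attachF d (\<sigma> k) T, wmult (kappa d e k) w, triv (m + d - 1))"
    using gmult_cls_cls valid_expand[OF vT k d_pos G_aut self_similar_G] ex valid_caret[OF assms(2,3)]
    by (simp add: tmult_def)
  moreover have "fleaves (attachF d (\<sigma> k) T) = m + d - 1" using fleaves_attach(2)[OF d_pos] \<sigma>k T(2) d_pos by simp
  moreover have "wmult (kappa d e k) w \<in> wr (m + d - 1) M"
    using wmult_wr[OF M_comp_H] kappa assms(3) by (cases "kappa d e k", cases w) auto
  ultimately show ?thesis using forest_attachF[OF T(1)] unfolding M_shaped_def
    by (intro exI[of _ "attachF d (\<sigma> k) T"] exI[of _ "wmult (kappa d e k) w"]) simp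
qed

lemma splitting_normal_form:
  assumes "spl d G H n Z"
  shows "\<exists>z. valid d G z \<and> Z = cls d G z \<and> heads z = n
    \<and> (\<forall>e \<in> wr n M. M_shaped (feet z) (gmult d G (cls d G (tdiag n e)) Z))"
  using assms
proof (induction rule: spl.induct)
  case (spl_base w n)
  show ?case
  proof (intro exI[of _ "tdiag n w"] conjI ballI)
    fix e assume e: "e \<in> wr n M"
    have "gmult d G (cls d G (tdiag n e)) (cls d G (triv n, w, triv n)) = cls d G (triv n, wmult e w, triv n)"
      using gmult_tdiag_tdiag wr_mono[OF M_G e] wr_mono[OF H_sub spl_base] by (simp add: tdiag_def)
    moreover have "wmult e w \<in> wr n M" using wmult_wr[OF M_comp_H] e spl_base by (cases e, cases w) auto
    ultimately show "M_shaped (feet (tdiag n w)) (gmult d G (cls d G (tdiag n e)) (cls d G (triv n, w, triv n)))"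
      unfolding M_shaped_def by (intro exI[of _ "triv n"] exI[of _ "wmult e w"])
        (simp add: forest_def triv_def fleaves_replicate)
  qed (use valid_tdiag_H[OF spl_base] in \<open>simp_all add: tdiag_def heads_def triv_def\<close>)
next
  case (spl_step n X m k w)
  obtain z where z: "valid d G z" "X = cls d G z" "heads z = n"
    "\<forall>e \<in> wr n M. M_shaped (feet z) (gmult d G (cls d G (tdiag n e)) X)" using spl_step.IH by blast
  have m: "feet z = m" using has_feet_cls[OF z(1)] spl_step.hyps(2) z(2) by simp
  note vc = valid_caret[OF spl_step.hyps(3,4)]
  obtain z2 where z2: "valid d G z2" "gmult d G X (cls d G (caretF d m k, w, triv (m + d - 1))) = cls d G z2"
    "heads z2 = n" "feet z2 = m + d - 1"
    using gmult_cls[OF z(1) vc] z m by (auto simp: heads_def feet_def caretF_def triv_def)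
  have "M_shaped (feet z2) (gmult d G (cls d G (tdiag n e)) (cls d G z2))" if "e \<in> wr n M" for e
  proof -
    have "gmult d G (cls d G (tdiag n e)) (cls d G z2)
        = gmult d G (gmult d G (cls d G (tdiag n e)) X) (cls d G (caretF d m k, w, triv (m + d - 1)))"
      using gmult_assoc[OF valid_tdiag[OF wr_mono[OF M_G that]] z(1) vc] z(2,3) z2(2) m
      by (simp add: heads_def caretF_def triv_def)
    then show ?thesis using M_shaped_gmult_caret z(4) that m spl_step.hyps(3,4) z2(4) by simp
  qed
  then show ?case using z2 by (intro exI[of _ z2]) simp
qed

end

section \<open>Finiteness of the splittings above a point\<close>

context self_similar_group
begin

lemma gmult_ginv_cancel:
  assumes va: "valid d G a" and vb: "valid d G b" and "heads a = heads b"
  shows "gmult d G (cls d G a) (gmult d G (ginv d G (cls d G a)) (cls d G b)) = cls d G b"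
proof -
  have vi: "valid d G (tinv d a)" using valid_tinv[OF va] .
  obtain z where z: "valid d G z" "gmult d G (cls d G (tinv d a)) (cls d G b) = cls d G z"
    "heads z = feet a" "feet z = feet b" "eventually_eq d (tmap z) (pcomp (tmap (tinv d a)) (tmap b))"
    using gmult_cls[OF vi vb] assms(3) tinv_heads_feet by metis
  have "eventually_eq d (pcomp (tmap a) (tmap z)) (pcomp (tmap a) (pcomp (tmap (tinv d a)) (tmap b)))"
    using pcomp_cong_right[OF z(5)] bounded_loss_pcomp bounded_loss_tmap vi vb by blast
  then have "eventually_eq d (tmap b) (pcomp (tmap a) (tmap z))"
    using pcomp_tmap_tinv_cancel[OF va vb assms(3)] eventually_eq_trans eventually_eq_sym by metis
  then show ?thesis
    using gmult_cls_eqI[OF va z(1) _ vb] ginv_cls[OF va] z assms(3) by simp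
qed

end

context subgroup_setting
begin

lemma PH_representative:
  assumes "Y \<in> PH d G H m"
  shows "\<exists>a. valid d G a \<and> Y = coset d G H (cls d G a) \<and> heads a = m"
proof -
  obtain a where "valid d G a" "Y = coset d G H (cls d G a)" "has_heads (cls d G a) m"
    using assms unfolding PH_def grpd_def by blast
  then show ?thesis using has_heads_cls by blast
qed

end

context coarse_setting
begin

lemma wr_M_factor:
  assumes "e \<in> wr q M"
  shows "\<exists>\<pi> bs hs. (\<pi>, bs) \<in> wr q (finitary d D \<inter> G) \<and> (id, hs) \<in> wr q H \<and> e = wmult (\<pi>, bs) (id, hs)"
proof -
  obtain \<pi> es where e: "e = (\<pi>, es)" "\<pi> permutes {0..<q}" "length es = q" "set es \<subseteq> M"
    using assms by (cases e) (auto simp: wr_def)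
  have "\<forall>i. \<exists>bh. i < q \<longrightarrow> fst bh \<in> finitary d D \<and> snd bh \<in> H \<and> es ! i = fst bh \<circ> snd bh"
    using e(3,4) nth_mem by (fastforce simp: M_def)
  then obtain bh where bh: "\<forall>i. i < q \<longrightarrow> fst (bh i) \<in> finitary d D \<and> snd (bh i) \<in> H
      \<and> es ! i = fst (bh i) \<circ> snd (bh i)"
    by (rule choice[THEN exE]) blast
  define bs where "bs = map (\<lambda>i. fst (bh i)) [0..<q]"
  define hs where "hs = map (\<lambda>i. snd (bh i)) [0..<q]"
  have "fst (bh i) \<in> G" if "i < q" for i
  proof -
    have h: "snd (bh i) \<in> H" "snd (bh i) \<in> aut d" "es ! i \<in> G"
      using bh that e(3,4) M_G H_sub G_aut nth_mem by blast+
    have "es ! i \<circ> ainv d (snd (bh i)) = fst (bh i) \<circ> (snd (bh i) \<circ> ainv d (snd (bh i)))"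
      using bh that by (simp add: comp_assoc)
    then have "fst (bh i) = es ! i \<circ> ainv d (snd (bh i))" using aut_comp_ainv[OF h(2)] by simp
    moreover have "snd (bh i) \<in> G" using h(1) H_sub by blast
    ultimately show ?thesis using G_comp[OF h(3) G_ainv] by simp
  qed
  then have "(\<pi>, bs) \<in> wr q (finitary d D \<inter> G)" using e(2) bh by (auto simp: wr_def bs_def)
  moreover have "(id, hs) \<in> wr q H" using bh by (auto simp: wr_def hs_def permutes_id)
  moreover have "e = wmult (\<pi>, bs) (id, hs)"
    using e bh by (auto simp: wmult_def bs_def hs_def intro: nth_equalityI)
  ultimately show ?thesis by blast
qed

lemma splitting_above_representative:
  assumes va0: "valid d G a0" and va: "valid d G a" and vb: "valid d G b"
    and a: "w0 \<in> wr (feet a0) H" "cls d G a = gmult d G (cls d G a0) (cls d G (tdiag (feet a0) w0))"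
    and heads: "heads a = heads b"
    and spl: "splitting d G H (gmult d G (ginv d G (cls d G a)) (cls d G b))"
  shows "\<exists>T e. forest d T \<and> fleaves T = feet b \<and> length T = feet a0 \<and> e \<in> wr (feet b) M
    \<and> cls d G b = gmult d G (cls d G a0) (cls d G (T, e, triv (feet b)))"
proof -
  define n0 where "n0 = feet a0"
  have vw0: "valid d G (tdiag n0 w0)" using valid_tdiag_H a(1) n0_def by simp
  obtain p where p: "valid d G p" "cls d G a = cls d G p" "feet p = n0"
    using gmult_cls[OF va0 vw0] a(2) n0_def by auto
  have "feet (tinv d a) = heads b" using tinv_heads_feet(2) heads by simp
  then obtain z0 where z0: "valid d G z0" "gmult d G (cls d G (tinv d a)) (cls d G b) = cls d G z0"
    "heads z0 = heads (tinv d a)" "feet z0 = feet b"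
    using gmult_cls[OF valid_tinv[OF va] vb] by blast
  have hz0: "heads z0 = n0" using z0(3) tinv_heads_feet(1) eventually_eq_if_cls_eq[OF va p(1,2)] p(3) by simp
  obtain n where "spl d G H n (cls d G z0)"
    using spl z0(2) ginv_cls[OF va] by (auto simp: splitting_def)
  then obtain z where z: "valid d G z" "cls d G z0 = cls d G z" "heads z = n"
    "\<forall>e \<in> wr n M. M_shaped (feet z) (gmult d G (cls d G (tdiag n e)) (cls d G z0))"
    using splitting_normal_form by blast
  have "n = n0" "feet z = feet b" using eventually_eq_if_cls_eq[OF z0(1) z(1,2)] z0(4) z(3) hz0 by auto
  then have "M_shaped (feet b) (gmult d G (cls d G (tdiag n0 w0)) (cls d G z0))"
    using z(4) a(1) wr_mono[OF H_M] n0_def by metis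
  then obtain T e where T: "forest d T" "fleaves T = feet b" "e \<in> wr (feet b) M"
    "gmult d G (cls d G (tdiag n0 w0)) (cls d G z0) = cls d G (T, e, triv (feet b))"
    by (auto simp: M_shaped_def)
  obtain p2 where "valid d G p2" "gmult d G (cls d G (tdiag n0 w0)) (cls d G z0) = cls d G p2" "heads p2 = n0"
    using gmult_cls[OF vw0 z0(1)] hz0 by auto
  then have len: "length T = n0"
    using eventually_eq_if_cls_eq[OF valid_leaf_triple[OF T(1,2) wr_mono[OF M_G T(3)]]] T(4) by (simp add: heads_def)
  have "cls d G b = gmult d G (cls d G a) (cls d G z0)"
    using gmult_ginv_cancel[OF va vb heads] z0(2) ginv_cls[OF va] by simp
  also have "\<dots> = gmult d G (cls d G a0) (gmult d G (cls d G (tdiag n0 w0)) (cls d G z0))"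
    using gmult_assoc[OF va0 vw0 z0(1)] a(2) hz0 n0_def by simp
  finally show ?thesis using T len n0_def by (intro exI[of _ T] exI[of _ e]) simp
qed

lemma coset_reduce_to_finitary:
  assumes va0: "valid d G a0" and T: "forest d T" "fleaves T = q" "length T = feet a0" and e: "e \<in> wr q M"
  shows "\<exists>\<pi> bs. (\<pi>, bs) \<in> wr q (finitary d D \<inter> G) \<and> coset d G H (gmult d G (cls d G a0) (cls d G (T, e, triv q)))
    = coset d G H (gmult d G (cls d G a0) (cls d G (T, (\<pi>, bs), triv q)))"
proof -
  obtain \<pi> bs hs where f: "(\<pi>, bs) \<in> wr q (finitary d D \<inter> G)" "(id, hs) \<in> wr q H"
    "e = wmult (\<pi>, bs) (id, hs)"
    using wr_M_factor[OF e] by blast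
  define c where "c = (T, (\<pi>, bs), triv q)"
  have vc: "valid d G c" using valid_leaf_triple[OF T(1,2)] wr_mono[OF _ f(1)] c_def by blast
  have vh: "valid d G (tdiag q (id, hs))" using valid_tdiag_H[OF f(2)] .
  have "cls d G (T, e, triv q) = gmult d G (cls d G c) (cls d G (tdiag q (id, hs)))"
    using gmult_cls_cls[of T "(\<pi>, bs)" "triv q" "(id, hs)" "triv q"] vc vh f(3)
    by (simp add: c_def tdiag_def tmult_def)
  then have "gmult d G (cls d G a0) (cls d G (T, e, triv q))
      = gmult d G (gmult d G (cls d G a0) (cls d G c)) (cls d G (tdiag q (id, hs)))"
    using gmult_assoc[OF va0 vc vh] T(3) by (simp add: c_def heads_def feet_def triv_def tdiag_def)
  moreover obtain p where "valid d G p" "gmult d G (cls d G a0) (cls d G c) = cls d G p" "feet p = q"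
    using gmult_cls[OF va0 vc] T(3) by (auto simp: c_def heads_def feet_def triv_def)
  ultimately show ?thesis using coset_gmult_tdiag f(1,2) c_def by metis
qed

theorem finite_PH_above:
  assumes "X \<in> PH d G H m"
  shows "finite {Y \<in> PH d G H m. pless d G H X Y \<and> has_phi d G H Y q}"
proof -
  obtain a0 where a0: "valid d G a0" "X = coset d G H (cls d G a0)" "heads a0 = m"
    using PH_representative[OF assms] by blast
  define C where "C = (\<lambda>(T, f). (T, f, triv q)) ` ({T. forest d T \<and> fleaves T = q} \<times> wr q (finitary d D \<inter> G))"
  have "finite C"
    using finite_forests[OF d_ge_2, of q] finite_wr[OF finite_subset[OF Int_lower1 finite_finitary], of q]
    by (simp add: C_def)
  moreover have "{Y \<in> PH d G H m. pless d G H X Y \<and> has_phi d G H Y q}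
      \<subseteq> (\<lambda>c. coset d G H (gmult d G (cls d G a0) (cls d G c))) ` C"
  proof
    fix Y assume "Y \<in> {Y \<in> PH d G H m. pless d G H X Y \<and> has_phi d G H Y q}"
    then have Y: "Y \<in> PH d G H m" "ple d G H X Y" "has_phi d G H Y q" by (auto simp: pless_def)
    obtain a b where ab: "valid d G a" "valid d G b" "X = coset d G H (cls d G a)"
      "Y = coset d G H (cls d G b)" "splitting d G H (gmult d G (ginv d G (cls d G a)) (cls d G b))"
      using Y(2) unfolding ple_def grpd_def by blast
    obtain c where c: "valid d G c" "Y = coset d G H (cls d G c)" "heads c = m"
      using PH_representative[OF Y(1)] by blast
    obtain c' where c': "valid d G c'" "Y = coset d G H (cls d G c')" "has_feet (cls d G c') q"
      using Y(3) unfolding has_phi_def grpd_def by blast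
    have hb: "heads b = m" "feet b = q"
      using coset_eq_heads_feet[OF ab(2) c(1)] coset_eq_heads_feet[OF ab(2) c'(1)] ab(4) c c'
        has_feet_cls[OF c'(1)] by simp_all
    have "heads a = m" using coset_eq_heads_feet[OF ab(1) a0(1)] ab(3) a0(2,3) by simp
    moreover obtain w0 where "w0 \<in> wr (feet a0) H"
      "cls d G a = gmult d G (cls d G a0) (cls d G (tdiag (feet a0) w0))"
      using cls_mem_coset[OF ab(1)] ab(3) a0(2) coset_iff[OF a0(1)] by auto
    ultimately obtain T e where "forest d T" "fleaves T = q" "length T = feet a0" "e \<in> wr q M"
      "cls d G b = gmult d G (cls d G a0) (cls d G (T, e, triv q))"
      using splitting_above_representative[OF a0(1) ab(1,2)] ab(5) hb by metis
    then show "Y \<in> (\<lambda>c. coset d G H (gmult d G (cls d G a0) (cls d G c))) ` C"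
      using coset_reduce_to_finitary[OF a0(1)] ab(4) by (fastforce simp: C_def)
  qed
  ultimately show ?thesis by (rule finite_surj)
qed

end

theorem mainTheorem12:
  fixes d :: nat and G H A :: "(nat list \<Rightarrow> nat list) set" and m q :: nat
    and X :: "triple set set"
  assumes "d \<ge> 2"
    and "subgrp d G" and "self_similar d G"
    and "subgrp d H" and "H \<subseteq> G"
    and "finite A" and "A \<subseteq> aut d" and "\<forall>a\<in>A. in_Vd d a"
    and "coarsely_self_similar d A H"
    and "X \<in> PH d G H m"
  shows "finite {Y \<in> PH d G H m. pless d G H X Y \<and> has_phi d G H Y q}"
proof -
  obtain D where "A \<subseteq> finitary d D" using finite_Vd_subset_finitary[OF assms(1,6,7,8)] by blast
  then interpret coarse_setting d G H A D
    using assms(1-5,9) by unfold_locales simp_all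
  show ?thesis using finite_PH_above[OF assms(10)] .
qed

end
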